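(* Consider the problem $\min_{\ell\le x\le u}H(x)$, $H(x)=\mathbb{E}_\xi[h(x,\xi)]$, under Assumption 1, run the Comparison-Based Algorithm (CBA) described in the context with functions $f_\pm$ satisfying (C1)–(C3), let $x^*$ be any optimal solution, $G^2=K_1^2+2K_3$ and $\sigma^2=K_2^2+2K_3$. (i) If (A5)(a) holds, then with constant stepsize $\eta_t=\eta\in(0,+\infty)$, $$\mathbb{E}(H(\bar x_T)-H(x^* ))\le \frac{(x_1-x^* )^2}{2\eta T}+\frac{\eta G^2}{2}.$$ (ii) If (A5)(b) holds, then with constant stepsize $\eta_t=\eta\in(0,\frac1L)$, $$\mathbb{E}(H(\bar x_T)-H(x^* ))\le \frac{(x_1-x^* )^2}{2\eta T}+\frac{H(x_1)-H(x^* )}{T}+\frac{\sigma^2}{1/\eta-L}.$$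
   Context: Setting: $-\infty\le\ell\le u\le+\infty$ (with $\ell\le x$ meaning $x>-\infty$ if $\ell=-\infty$, similarly for $u$); $\xi$ a real random variable with c.d.f. $F$, support $\Xi$, $\underline{s}=\inf\Xi$, $\bar s=\sup\Xi$; $h:\mathbb{R}^2\to\mathbb{R}$, $H(x)=\mathbb{E}_\xi[h(x,\xi)]$. Assumption 1: (A1) $\xi$ has a continuous distribution. (A2) For each $\xi$, $x\mapsto h(x,\xi)$ is continuously differentiable on $[\ell,\xi)$ and $(\xi,u]$ with derivative $h'_x(x,\xi)$; for every $x\in[\ell,u]$, $h'_-(x):=\lim_{z\to x^-}h'_x(x,z)$ and $h'_+(x):=\lim_{z\to x^+}h'_x(x,z)$ exist and are finite. (A3) For $x\in[\ell,u]$, $x\neq\xi$, $h''_{x,\xi}(x,\xi)=\partial^2h/\partial\xi\partial x$ exists. (A4) $H$ is differentiable and $\mu$-convex on $[\ell,u]$ for some $\mu\ge 0$: $H(x_2)\ge H(x_1)+H'(x_1)(x_2-x_1)+\frac\mu2(x_2-x_1)^2$ for all $x_1,x_2\in[\ell,u]$; and $\mathbb{E}_\xi h'_x(x,\xi)=H'(x)$ on $[\ell,u]$. (A5) (a) $\mathbb{E}_\xi(h'_x(x,\xi))^2\le K_1^2$ for all $x\in[\ell,u]$, or (b) $H'$ is $L$-Lipschitz on $[\ell,u]$ and $\mathbb{E}_\xi(h'_x(x,\xi)-H'(x))^2\le K_2^2$ for all $x\in[\ell,u]$. Conditions: (C1) $f_-(x,z)=0$ for $z\ge x$, $f_-(x,z)>0$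 for $\underline s\le z<x$, $\int_{-\infty}^{x^-}f_-(x,z)dz=1$. (C2) $f_+(x,z)=0$ for $z\le x$, $f_+(x,z)>0$ for $\bar s\ge z>x$, $\int_{x^+}^\infty f_+(x,z)dz=1$. (C3) There is $K_3$ with $\int_{\underline s}^{x^-}\frac{F(z)(h''_{x,z}(x,z))^2}{f_-(x,z)}dz\le K_3$ and $\int_{x^+}^{\bar s}\frac{(1-F(z))(h''_{x,z}(x,z))^2}{f_+(x,z)}dz\le K_3$ for all $x\in[\ell,u]$. CBA: given $x_1\in[\ell,u]$, stepsizes $\eta_t>0$ and horizon $T$, for $t=1,\dots,T$: draw $\xi_t$ from the distribution of $\xi$ independently of the past (resampling if $\xi_t=x_t$). If $\xi_t<x_t$, draw $z_t$ with density $f_-(x_t,\cdot)$ and set $g_t=h'_-(x_t)$ if $z_t<\xi_t$, $g_t=h'_-(x_t)-h''_{x,z}(x_t,z_t)/f_-(x_t,z_t)$ if $z_t\ge\xi_t$. If $\xi_t>x_t$, draw $z_t$ with density $f_+(x_t,\cdot)$ and set $g_t=h'_+(x_t)$ if $z_t>\xi_t$, $g_t=h'_+(x_t)+h''_{x,z}(x_t,z_t)/f_+(x_t,z_t)$ if $z_t\le\xi_t$. Set $x_{t+1}=\max(\ell,\min(u,x_t-\eta_tg_t))$. Output $\bar x_T=\frac1T\sum_{t=1}^Tx_t$. *)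

theory Defs
  imports "HOL-Probability.Probability"
begin

definition feas :: "ereal \<Rightarrow> ereal \<Rightarrow> real set" where
  "feas l u = {x. l \<le> ereal x \<and> ereal x \<le> u}"

definition proj :: "ereal \<Rightarrow> ereal \<Rightarrow> real \<Rightarrow> real" where
  "proj l u y = real_of_ereal (max l (min u (ereal y)))"

definition supp_meas :: "real measure \<Rightarrow> real set" where
  "supp_meas D = {x. \<forall>e>0. 0 < measure D {x - e<..<x + e}}"

definition cdf_of :: "real measure \<Rightarrow> real \<Rightarrow> real" where
  "cdf_of D z = measure D {..z}"

definition grad_minus :: "(real \<Rightarrow> real) \<Rightarrow> (real \<Rightarrow> real \<Rightarrow> real) \<Rightarrow> (real \<Rightarrow> real \<Rightarrow> real)
    \<Rightarrow> real \<Rightarrow> real \<Rightarrow> real \<Rightarrow> real" where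
  "grad_minus hm hxz fm x xi z = (if z < xi then hm x else hm x - hxz x z / fm x z)"

definition grad_plus :: "(real \<Rightarrow> real) \<Rightarrow> (real \<Rightarrow> real \<Rightarrow> real) \<Rightarrow> (real \<Rightarrow> real \<Rightarrow> real)
    \<Rightarrow> real \<Rightarrow> real \<Rightarrow> real \<Rightarrow> real" where
  "grad_plus hp hxz fp x xi z = (if xi < z then hp x else hp x + hxz x z / fp x z)"

text \<open>One CBA iteration as a Markov kernel: distribution of x_{t+1} given x_t = x.
  xi is drawn from D conditioned on xi \<noteq> x (the resampling step), then z from the
  density f_-(x,.) or f_+(x,.), then the projected gradient step with stepsize eta.\<close>
definition cba_step :: "real measure \<Rightarrow> (real \<Rightarrow> real \<Rightarrow> real) \<Rightarrow> (real \<Rightarrow> real \<Rightarrow> real)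
    \<Rightarrow> (real \<Rightarrow> real) \<Rightarrow> (real \<Rightarrow> real) \<Rightarrow> (real \<Rightarrow> real \<Rightarrow> real)
    \<Rightarrow> real \<Rightarrow> ereal \<Rightarrow> ereal \<Rightarrow> real \<Rightarrow> real measure" where
  "cba_step D fm fp hm hp hxz eta l u x =
     uniform_measure D {xi. xi \<noteq> x} \<bind> (\<lambda>xi.
       if xi < x then
         density lborel (\<lambda>z. ennreal (fm x z)) \<bind>
           (\<lambda>z. return borel (proj l u (x - eta * grad_minus hm hxz fm x xi z)))
       else
         density lborel (\<lambda>z. ennreal (fp x z)) \<bind>
           (\<lambda>z. return borel (proj l u (x - eta * grad_plus hp hxz fp x xi z))))"

text \<open>Run n iterations of a kernel K from state x, accumulating the sum of the
  visited iterates: cba_run K T x_1 0 is the joint law of (x_{T+1}, x_1 + ... + x_T).\<close>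
fun cba_run :: "(real \<Rightarrow> real measure) \<Rightarrow> nat \<Rightarrow> real \<Rightarrow> real \<Rightarrow> (real \<times> real) measure" where
  "cba_run K 0 x s = return borel (x, s)"
| "cba_run K (Suc n) x s = K x \<bind> (\<lambda>x'. cba_run K n x' (s + x))"

end

(* Given the comparison sample xi, the CBA update uses
     g = h'_-(x) - [xi <= z < x] h''_xz(x, z) / f_-(x, z)     (xi < x, and symmetrically for xi > x),
   an importance-sampling estimate of the integral of h''_xz over the segment between xi and x.
   By the fundamental theorem of calculus its conditional mean is h'_x(x, xi), and its conditional
   second moment exceeds h'_x(x, xi)^2 by at most J(x, xi), the integral of h''_xz^2 / f over that
   segment. Tonelli turns E J(x, xi) into the two integrals of (C3), so g is an unbiased estimate of
   H'(x) with E g^2 <= E h'_x^2 + 2 K3. The rate is then the projected stochastic gradient bound: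
   for the potential Phi_n(v) = (v - xstar)^2 / (2 eta) + n C, augmented by H(v) - H(xstar) in case (ii)
   where the descent lemma for the L-Lipschitz gradient absorbs the step, every step lowers E Phi
   by at least H(x_t) - H(xstar), and convexity passes from the mean of the H(x_t) to H of the mean. *)

theory Submission
  imports Defs
begin

section \<open>Measure-theoretic tools\<close>

text \<open>The map \<open>f\<close> need not be measurable: a set with nonmeasurable preimage has measure zero under
  \<open>distr M N f\<close>. This matters because the CBA kernel is not known to be measurable in the current
  iterate (\<open>f\<^sub>\<plusminus>\<close> are only measurable in \<open>z\<close>), so integrals along the chain can only be bounded,
  not computed, by \<open>nn_integral_bind_le\<close>.\<close>

lemma nn_integral_distr_le:
  fixes F :: "'b \<Rightarrow> ennreal"
  assumes "F \<in> borel_measurable N"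
  shows "(\<integral>\<^sup>+y. F y \<partial>distr M N f) \<le> (\<integral>\<^sup>+x. F (f x) \<partial>M)"
proof -
  let ?\<nu> = "distr M N f"
  define minorant where "minorant G \<phi> \<longleftrightarrow> \<phi> \<in> borel_measurable M
    \<and> (\<forall>x\<in>space M. \<phi> x \<le> (if f x \<in> space N then G (f x) else 0))
    \<and> (\<integral>\<^sup>+y. G y \<partial>?\<nu>) \<le> (\<integral>\<^sup>+x. \<phi> x \<partial>M)" for G \<phi>
  have "\<exists>\<phi>. minorant F \<phi>"
    using assms
  proof (induct rule: borel_measurable_induct)
    case (cong F G)
    then obtain \<phi> where \<phi>: "minorant G \<phi>"
      by blast
    have "(\<integral>\<^sup>+y. F y \<partial>?\<nu>) = (\<integral>\<^sup>+y. G y \<partial>?\<nu>)"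
      using cong by (intro nn_integral_cong) auto
    moreover have "(if f x \<in> space N then F (f x) else 0) = (if f x \<in> space N then G (f x) else 0)" for x
      using cong(3) by simp
    ultimately have "minorant F \<phi>"
      using \<phi> unfolding minorant_def by presburger
    then show ?case
      by blast
  next
    case (set A)
    define \<phi> where "\<phi> = (if f -` A \<inter> space M \<in> sets M then indicator (f -` A \<inter> space M) else (\<lambda>_. 0::ennreal))"
    have "(\<integral>\<^sup>+y. indicator A y \<partial>?\<nu>) = emeasure ?\<nu> A"
      using set by simp
    also have "\<dots> \<le> (\<integral>\<^sup>+x. \<phi> x \<partial>M)"
      unfolding distr_def emeasure_measure_of_conv \<phi>_def
      using set by (auto simp: sets.sigma_sets_eq emeasure_notin_sets)
    finally have "(\<integral>\<^sup>+y. indicator A y \<partial>?\<nu>) \<le> (\<integral>\<^sup>+x. \<phi> x \<partial>M)" .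
    moreover have "\<phi> x \<le> (if f x \<in> space N then indicator A (f x) else 0)" if "x \<in> space M" for x
      using sets.sets_into_space[OF set] that by (auto simp: \<phi>_def indicator_def)
    ultimately have "minorant (indicator A) \<phi>"
      unfolding minorant_def by (simp add: \<phi>_def)
    then show ?case
      by blast
  next
    case (mult G c)
    then obtain \<phi> where \<phi>: "minorant G \<phi>"
      by blast
    have "(\<integral>\<^sup>+y. c * G y \<partial>?\<nu>) = c * (\<integral>\<^sup>+y. G y \<partial>?\<nu>)"
      using mult by (intro nn_integral_cmult) auto
    also have "\<dots> \<le> c * (\<integral>\<^sup>+x. \<phi> x \<partial>M)"
      using \<phi> unfolding minorant_def by (intro mult_left_mono) auto
    also have "\<dots> = (\<integral>\<^sup>+x. c * \<phi> x \<partial>M)"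
      using \<phi> unfolding minorant_def by (intro nn_integral_cmult[symmetric]) simp
    finally have "(\<integral>\<^sup>+y. c * G y \<partial>?\<nu>) \<le> (\<integral>\<^sup>+x. c * \<phi> x \<partial>M)" .
    moreover have "c * \<phi> x \<le> (if f x \<in> space N then c * G (f x) else 0)" if "x \<in> space M" for x
    proof -
      have "\<phi> x \<le> (if f x \<in> space N then G (f x) else 0)"
        using \<phi> that unfolding minorant_def by blast
      then show ?thesis
        by (cases "f x \<in> space N") (auto intro: mult_left_mono)
    qed
    moreover have "(\<lambda>x. c * \<phi> x) \<in> borel_measurable M"
      using \<phi> unfolding minorant_def by (intro borel_measurable_times_ennreal) auto
    ultimately have "minorant (\<lambda>y. c * G y) (\<lambda>x. c * \<phi> x)"
      using \<phi> unfolding minorant_def by simp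
    then show ?case
      by blast
  next
    case (add G G')
    then obtain \<phi> \<psi> where \<phi>: "minorant G \<phi>" and \<psi>: "minorant G' \<psi>"
      by blast
    have "(\<integral>\<^sup>+y. G' y + G y \<partial>?\<nu>) = (\<integral>\<^sup>+y. G' y \<partial>?\<nu>) + (\<integral>\<^sup>+y. G y \<partial>?\<nu>)"
      using add by (intro nn_integral_add) auto
    also have "\<dots> \<le> (\<integral>\<^sup>+x. \<psi> x \<partial>M) + (\<integral>\<^sup>+x. \<phi> x \<partial>M)"
      using \<phi> \<psi> unfolding minorant_def by (intro add_mono) auto
    also have "\<dots> = (\<integral>\<^sup>+x. \<psi> x + \<phi> x \<partial>M)"
      using \<phi> \<psi> unfolding minorant_def by (intro nn_integral_add[symmetric]) auto
    finally have "(\<integral>\<^sup>+y. G' y + G y \<partial>?\<nu>) \<le> (\<integral>\<^sup>+x. \<psi> x + \<phi> x \<partial>M)" .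
    moreover have "\<psi> x + \<phi> x \<le> (if f x \<in> space N then G' (f x) + G (f x) else 0)" if "x \<in> space M" for x
    proof -
      have "\<phi> x \<le> (if f x \<in> space N then G (f x) else 0)" "\<psi> x \<le> (if f x \<in> space N then G' (f x) else 0)"
        using \<phi> \<psi> that unfolding minorant_def by blast+
      then show ?thesis
        by (cases "f x \<in> space N") (auto intro: add_mono)
    qed
    moreover have "(\<lambda>x. \<psi> x + \<phi> x) \<in> borel_measurable M"
      using \<phi> \<psi> unfolding minorant_def by (intro borel_measurable_add) auto
    ultimately have "minorant (\<lambda>y. G' y + G y) (\<lambda>x. \<psi> x + \<phi> x)"
      using \<phi> \<psi> unfolding minorant_def by simp
    then show ?case
      by blast
  next
    case (seq U)
    then have "\<forall>i. \<exists>\<phi>. minorant (U i) \<phi>"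
      by blast
    then have "\<exists>\<phi>. \<forall>i. minorant (U i) (\<phi> i)"
      by (rule choice)
    then obtain \<phi> where \<phi>: "\<And>i. minorant (U i) (\<phi> i)"
      by blast
    then have \<phi>_meas: "\<And>i. \<phi> i \<in> borel_measurable M"
      and \<phi>_le: "\<And>i x. x \<in> space M \<Longrightarrow> \<phi> i x \<le> (if f x \<in> space N then U i (f x) else 0)"
      unfolding minorant_def by blast+
    have "(\<integral>\<^sup>+y. (SUP i. U i) y \<partial>?\<nu>) = (SUP i. \<integral>\<^sup>+y. U i y \<partial>?\<nu>)"
      unfolding SUP_apply using seq by (intro nn_integral_monotone_convergence_SUP) auto
    also have "\<dots> \<le> (SUP i. \<integral>\<^sup>+x. \<phi> i x \<partial>M)"
      using \<phi> unfolding minorant_def by (intro SUP_mono) auto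
    also have "\<dots> \<le> (\<integral>\<^sup>+x. (SUP i. \<phi> i x) \<partial>M)"
      by (intro SUP_least nn_integral_mono) (auto intro: SUP_upper)
    finally have "(\<integral>\<^sup>+y. (SUP i. U i) y \<partial>?\<nu>) \<le> (\<integral>\<^sup>+x. (SUP i. \<phi> i x) \<partial>M)" .
    moreover have "(SUP i. \<phi> i x) \<le> (if f x \<in> space N then (SUP i. U i) (f x) else 0)"
      if "x \<in> space M" for x
      using \<phi>_le[OF that] unfolding SUP_apply
      by (cases "f x \<in> space N") (auto intro: SUP_mono SUP_least)
    moreover have "(\<lambda>x. SUP i. \<phi> i x) \<in> borel_measurable M"
      using \<phi>_meas by measurable
    ultimately have "minorant (SUP i. U i) (\<lambda>x. SUP i. \<phi> i x)"
      by (simp add: minorant_def)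
    then show ?case
      by blast
  qed
  then obtain \<phi> where \<phi>: "minorant F \<phi>"
    by blast
  then have "(\<integral>\<^sup>+x. \<phi> x \<partial>M) \<le> (\<integral>\<^sup>+x. F (f x) \<partial>M)"
    unfolding minorant_def by (intro nn_integral_mono) (auto split: if_split_asm)
  with \<phi> show ?thesis
    unfolding minorant_def by (blast intro: order_trans)
qed

lemma nn_integral_bind_le:
  fixes g :: "'b \<Rightarrow> ennreal"
  assumes M: "space M \<noteq> {}" and N: "\<And>x. x \<in> space M \<Longrightarrow> sets (N x) = sets R"
    and g: "g \<in> borel_measurable R"
  shows "(\<integral>\<^sup>+y. g y \<partial>(M \<bind> N)) \<le> (\<integral>\<^sup>+x. (\<integral>\<^sup>+y. g y \<partial>N x) \<partial>M)"
proof -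
  have "sets (N (SOME x. x \<in> space M)) = sets R"
    using N M by (simp add: some_in_eq)
  from subprob_algebra_cong[OF this]
  have "(\<integral>\<^sup>+y. g y \<partial>(M \<bind> N)) = (\<integral>\<^sup>+y. g y \<partial>join (distr M (subprob_algebra R) N))"
    using M by (simp add: bind_def)
  also have "\<dots> = (\<integral>\<^sup>+M'. (\<integral>\<^sup>+y. g y \<partial>M') \<partial>distr M (subprob_algebra R) N)"
    using g by (intro nn_integral_join) auto
  also have "\<dots> \<le> (\<integral>\<^sup>+x. (\<integral>\<^sup>+y. g y \<partial>N x) \<partial>M)"
    using g by (intro nn_integral_distr_le nn_integral_measurable_subprob_algebra)
  finally show ?thesis .
qed

lemma nn_integral_indicator_swap:
  fixes D :: "real measure" and E :: "real \<Rightarrow> ennreal" and Q :: "real \<Rightarrow> real \<Rightarrow> bool"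
  assumes D: "sigma_finite_measure D" "sets D = sets borel"
    and E[measurable]: "E \<in> borel_measurable borel"
    and Q[measurable]: "Measurable.pred (borel \<Otimes>\<^sub>M borel) (\<lambda>p. Q (fst p) (snd p))"
  shows "(\<integral>\<^sup>+\<xi>. \<integral>\<^sup>+z. indicator {z. Q \<xi> z} z * E z \<partial>lborel \<partial>D)
      = (\<integral>\<^sup>+z. emeasure D {\<xi>. Q \<xi> z} * E z \<partial>lborel)"
proof -
  define f where "f p = indicator {z. Q (fst p) z} (snd p) * E (snd p)" for p :: "real \<times> real"
  have "f \<in> borel_measurable (borel \<Otimes>\<^sub>M borel)"
    unfolding f_def indicator_def mem_Collect_eq by measurable
  moreover have "sets (D \<Otimes>\<^sub>M lborel) = sets (borel \<Otimes>\<^sub>M borel)"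
    using D(2) by (intro sets_pair_measure_cong) auto
  ultimately have f_meas: "f \<in> borel_measurable (D \<Otimes>\<^sub>M lborel)"
    using measurable_cong_sets by blast
  have "pair_sigma_finite D lborel"
    using D(1) by (simp add: pair_sigma_finite_def lborel.sigma_finite_measure_axioms)
  then have "(\<integral>\<^sup>+\<xi>. \<integral>\<^sup>+z. f (\<xi>, z) \<partial>lborel \<partial>D) = (\<integral>\<^sup>+z. \<integral>\<^sup>+\<xi>. f (\<xi>, z) \<partial>D \<partial>lborel)"
    using f_meas by (rule pair_sigma_finite.Fubini[symmetric])
  also have "\<dots> = (\<integral>\<^sup>+z. emeasure D {\<xi>. Q \<xi> z} * E z \<partial>lborel)"
  proof (rule nn_integral_cong)
    fix z :: real
    have "(\<lambda>\<xi>::real. (\<xi>, z)) \<in> borel \<rightarrow>\<^sub>M borel \<Otimes>\<^sub>M borel"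
      by measurable
    from measurable_compose[OF this Q] have "{\<xi>. Q \<xi> z} \<in> sets D"
      using D(2) by (simp add: pred_def)
    then show "(\<integral>\<^sup>+\<xi>. f (\<xi>, z) \<partial>D) = emeasure D {\<xi>. Q \<xi> z} * E z"
      using nn_integral_cmult_indicator[of "{\<xi>. Q \<xi> z}" D "E z"]
      by (simp add: f_def indicator_def mult.commute)
  qed
  finally show ?thesis
    by (simp add: f_def)
qed

lemma borel_measurable_derivative:
  fixes f f' :: "real \<Rightarrow> real"
  assumes f: "f \<in> borel_measurable borel"
    and d: "\<And>z. z \<noteq> x \<Longrightarrow> (f has_real_derivative f' z) (at z)"
  shows "f' \<in> borel_measurable borel"
proof -
  define u where "u i z = (if z = x then f' x else (f (z + 1 / Suc i) - f z) * Suc i)" for i :: nat and z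
  show ?thesis
  proof (rule borel_measurable_LIMSEQ_real[where u=u])
    fix z :: real
    show "(\<lambda>i. u i z) \<longlonglongrightarrow> f' z"
    proof (cases "z = x")
      case True then show ?thesis by (simp add: u_def)
    next
      case False
      have "((\<lambda>h. (f (z + h) - f z) / h) \<longlongrightarrow> f' z) (at 0)"
        using d[OF False] by (simp add: DERIV_def)
      moreover have "filterlim (\<lambda>i::nat. 1 / real (Suc i)) (at 0) sequentially"
        by (rule filterlim_atI) (auto intro!: LIMSEQ_inverse_real_of_nat[unfolded inverse_eq_divide] simp del: of_nat_Suc)
      ultimately have "(\<lambda>i. (f (z + 1 / real (Suc i)) - f z) / (1 / real (Suc i))) \<longlonglongrightarrow> f' z"
        by (rule filterlim_compose)
      then show ?thesis using False by (simp add: u_def)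
    qed
  next
    fix i
    show "u i \<in> borel_measurable borel"
      unfolding u_def[abs_def] using f by measurable
  qed
qed

lemma AE_in_supp_meas:
  assumes "finite_measure D" and D_sets: "sets D = sets borel"
  shows "AE \<xi> in D. \<xi> \<in> supp_meas D"
proof -
  interpret finite_measure D
    by fact
  define Null where "Null = {{x - e<..<x + e} | x e. 0 < e \<and> measure D {x - e<..<x + e} = 0}"
  obtain C where C: "C \<subseteq> Null" "countable C" "\<Union>C = \<Union>Null"
    by (rule Lindelof[of Null]) (auto simp: Null_def)
  have "AE \<xi> in D. \<forall>I\<in>C. \<xi> \<notin> I"
  proof (subst AE_ball_countable[OF C(2)], intro ballI AE_not_in)
    fix I assume "I \<in> C"
    then obtain x e where "I = {x - e<..<x + e}" "measure D I = 0"
      using C(1) by (auto simp: Null_def)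
    then show "I \<in> null_sets D"
      using D_sets by (auto simp: null_sets_def emeasure_eq_measure)
  qed
  moreover have "\<xi> \<in> supp_meas D" if "\<forall>I\<in>C. \<xi> \<notin> I" for \<xi>
  proof (rule ccontr)
    assume "\<xi> \<notin> supp_meas D"
    then obtain e where "0 < e" "measure D {\<xi> - e<..<\<xi> + e} = 0"
      by (auto simp: supp_meas_def not_less intro: antisym measure_nonneg)
    then have "{\<xi> - e<..<\<xi> + e} \<in> Null" "\<xi> \<in> {\<xi> - e<..<\<xi> + e}"
      by (auto simp: Null_def)
    then show False
      using that C(3) by blast
  qed
  ultimately show ?thesis
    by (rule eventually_mono)
qed

lemma integral_le_of_nn_integral_le:
  fixes f :: "'a \<Rightarrow> real"
  assumes "f \<in> borel_measurable M" "\<And>x. 0 \<le> f x" "(\<integral>\<^sup>+x. ennreal (f x) \<partial>M) \<le> ennreal c" "0 \<le> c"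
  shows "integrable M f" and "(\<integral>x. f x \<partial>M) \<le> c"
proof -
  have "(\<integral>\<^sup>+x. ennreal (norm (f x)) \<partial>M) < \<infinity>"
    using assms(2) order.strict_trans1[OF assms(3) ennreal_less_top] by simp
  then show "integrable M f"
    using assms(1) by (rule integrableI_bounded[rotated])
  show "(\<integral>x. f x \<partial>M) \<le> c"
    using assms(3,4) by (rule integral_real_bounded[rotated])
qed

section \<open>Calculus and importance sampling\<close>

lemma set_integral_FTC_Ioo:
  fixes \<phi> \<phi>' :: "real \<Rightarrow> real"
  assumes ab: "a < b"
    and der: "\<And>z. a < z \<Longrightarrow> z < b \<Longrightarrow> (\<phi> has_real_derivative \<phi>' z) (at z)"
    and lim_a: "(\<phi> \<longlongrightarrow> A) (at_right a)" and lim_b: "(\<phi> \<longlongrightarrow> B) (at_left b)"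
    and int: "set_integrable lborel {a<..<b} \<phi>'"
  shows "(LINT z:{a<..<b}|lborel. \<phi>' z) = B - A"
proof -
  define \<psi> where "\<psi> z = (if z \<le> a then A else if b \<le> z then B else \<phi> z)" for z
  have \<psi>_eq: "\<psi> z = \<phi> z" if "z \<in> {a<..<b}" for z
    using that by (simp add: \<psi>_def)
  have \<psi>_ends: "\<psi> a = A" "\<psi> b = B"
    using ab by (simp_all add: \<psi>_def)
  have "continuous_on {a..b} \<psi>"
  proof (rule continuous_on_IccI[OF _ _ _ ab])
    have "\<forall>\<^sub>F z in at_right a. \<phi> z = \<psi> z"
      using ab \<psi>_eq by (intro eventually_at_rightI[of a b]) auto
    from Lim_transform_eventually[OF lim_a this] show "(\<psi> \<longlongrightarrow> \<psi> a) (at_right a)"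
      unfolding \<psi>_ends .
    have "\<forall>\<^sub>F z in at_left b. \<phi> z = \<psi> z"
      using ab \<psi>_eq by (intro eventually_at_leftI[of a b]) auto
    from Lim_transform_eventually[OF lim_b this] show "(\<psi> \<longlongrightarrow> \<psi> b) (at_left b)"
      unfolding \<psi>_ends .
    fix z assume z: "a < z" "z < b"
    have "\<phi> \<midarrow>z\<rightarrow> \<phi> z"
      using DERIV_isCont[OF der[OF z]] by (simp add: isCont_def)
    then have "\<psi> \<midarrow>z\<rightarrow> \<phi> z"
      by (rule Lim_transform_within_open[of _ _ _ _ "{a<..<b}"]) (use z \<psi>_eq in auto)
    then show "\<psi> \<midarrow>z\<rightarrow> \<psi> z"
      using z by (simp add: \<psi>_def)
  qed
  moreover have "(\<psi> has_vector_derivative \<phi>' z) (at z)" if "z \<in> {a<..<b}" for z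
    unfolding has_real_derivative_iff_has_vector_derivative[symmetric]
  proof (rule has_field_derivative_transform_within_open[of \<phi> _ z "{a<..<b}"])
    show "(\<phi> has_real_derivative \<phi>' z) (at z)"
      using that by (intro der) auto
  qed (use that \<psi>_eq in \<open>auto simp: \<psi>_def\<close>)
  ultimately have "(\<phi>' has_integral (\<psi> b - \<psi> a)) {a..b}"
    using ab by (intro fundamental_theorem_of_calculus_interior_strong[of "{}"]) auto
  then have "(\<phi>' has_integral (B - A)) {a<..<b}"
    unfolding \<psi>_ends has_integral_Icc_iff_Ioo .
  then show ?thesis
    using set_borel_integral_eq_integral(2)[OF int] by (simp add: integral_unique)
qed

lemma set_integrable_of_weighted_square:
  fixes w \<phi> :: "real \<Rightarrow> real"
  assumes w: "integrable lborel w" and w_nonneg: "\<And>z. 0 \<le> w z"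
    and A: "A \<in> sets borel" and w_pos: "\<And>z. z \<in> A \<Longrightarrow> 0 < w z"
    and \<phi>_meas: "\<phi> \<in> borel_measurable borel"
    and \<phi>_sq: "set_integrable lborel A (\<lambda>z. \<phi> z ^ 2 / w z)"
  shows "set_integrable lborel A \<phi>"
  unfolding set_integrable_def
proof (rule Bochner_Integration.integrable_bound)
  show "integrable lborel (\<lambda>z. indicator A z *\<^sub>R (\<phi> z ^ 2 / w z) + w z)"
    using \<phi>_sq w unfolding set_integrable_def by auto
  show "(\<lambda>z. indicator A z *\<^sub>R \<phi> z) \<in> borel_measurable lborel"
    using \<phi>_meas A by auto
  have "\<bar>\<phi> z\<bar> \<le> \<phi> z ^ 2 / w z + w z" if "z \<in> A" for z
  proof -
    have "(\<bar>\<phi> z\<bar> - w z)^2 / w z = \<phi> z ^ 2 / w z + w z - 2 * \<bar>\<phi> z\<bar>"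
      using w_pos[OF that] by (simp add: field_simps power2_eq_square)
    moreover have "0 \<le> (\<bar>\<phi> z\<bar> - w z)^2 / w z"
      using w_pos[OF that] by simp
    ultimately show ?thesis
      by simp
  qed
  then show "AE z in lborel. norm (indicator A z *\<^sub>R \<phi> z) \<le> norm (indicator A z *\<^sub>R (\<phi> z ^ 2 / w z) + w z)"
    using w_nonneg by (intro AE_I2) (auto simp: indicator_def)
qed

lemma nn_integral_importance_estimator_le:
  fixes w \<phi> P :: "real \<Rightarrow> real" and A :: "real set" and \<alpha> \<beta> \<gamma> c :: real
  assumes w_meas: "w \<in> borel_measurable borel" and w_nonneg: "\<And>z. 0 \<le> w z"
    and w_density: "(\<integral>\<^sup>+z. ennreal (w z) \<partial>lborel) = 1"
    and A: "A \<in> sets borel" and w_pos: "\<And>z. z \<in> A \<Longrightarrow> 0 < w z"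
    and \<phi>_meas: "\<phi> \<in> borel_measurable borel"
    and \<phi>_sq: "set_integrable lborel A (\<lambda>z. \<phi> z ^ 2 / w z)"
    and P_meas: "P \<in> borel_measurable borel" and P_nonneg: "\<And>v. 0 \<le> P v"
    and P_le: "\<And>v. P v \<le> \<alpha> + \<beta> * v + \<gamma> * v^2" and \<gamma>: "0 \<le> \<gamma>"
  defines "m \<equiv> c + (LINT z:A|lborel. \<phi> z)"
  shows "(\<integral>\<^sup>+z. ennreal (w z) * ennreal (P (if z \<in> A then c + \<phi> z / w z else c)) \<partial>lborel)
      \<le> ennreal (\<alpha> + \<beta> * m + \<gamma> * (m^2 + (LINT z:A|lborel. \<phi> z ^ 2 / w z)))"
proof -
  define g where "g z = (if z \<in> A then c + \<phi> z / w z else c)" for z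
  define I where "I = (LINT z:A|lborel. \<phi> z)"
  define J where "J = (LINT z:A|lborel. \<phi> z ^ 2 / w z)"
  define R where "R z = (\<alpha> + \<beta> * c + \<gamma> * c^2) * w z + (\<beta> + 2 * \<gamma> * c) * (indicator A z * \<phi> z)
      + \<gamma> * (indicator A z * (\<phi> z ^ 2 / w z))" for z
  have w_int: "integrable lborel w" and w_one: "integral\<^sup>L lborel w = 1"
    using nn_integral_eq_integrable[of w lborel 1] w_meas w_nonneg w_density by auto
  have \<phi>_int: "set_integrable lborel A \<phi>"
    by (rule set_integrable_of_weighted_square[OF w_int w_nonneg A w_pos \<phi>_meas \<phi>_sq])
  have R_int: "integrable lborel R"
    using w_int \<phi>_int \<phi>_sq unfolding R_def set_integrable_def
    by (intro Bochner_Integration.integrable_add integrable_mult_right) auto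
  have "integral\<^sup>L lborel R = (\<alpha> + \<beta> * c + \<gamma> * c^2) + (\<beta> + 2 * \<gamma> * c) * I + \<gamma> * J"
    using w_int w_one \<phi>_int \<phi>_sq unfolding R_def I_def J_def set_lebesgue_integral_def set_integrable_def
    by (simp del: times_divide_eq_right)
  also have "\<dots> \<le> \<alpha> + \<beta> * m + \<gamma> * (m^2 + J)"
    using mult_nonneg_nonneg[OF \<gamma> zero_le_square[of I]]
    by (simp add: m_def I_def[symmetric] power2_eq_square algebra_simps)
  finally have R_le: "integral\<^sup>L lborel R \<le> \<alpha> + \<beta> * m + \<gamma> * (m^2 + J)" .
  have wP_le: "w z * P (g z) \<le> R z" for z
  proof -
    have "w z * P (g z) \<le> w z * (\<alpha> + \<beta> * g z + \<gamma> * (g z)^2)"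
      using w_nonneg P_le by (rule mult_left_mono[rotated])
    also have "\<dots> = R z"
      using w_pos[of z] by (cases "z \<in> A") (auto simp: g_def R_def field_simps power2_eq_square)
    finally show ?thesis .
  qed
  have "(\<integral>\<^sup>+z. ennreal (w z) * ennreal (P (g z)) \<partial>lborel) \<le> (\<integral>\<^sup>+z. ennreal (R z) \<partial>lborel)"
    using wP_le by (intro nn_integral_mono) (simp add: ennreal_mult[symmetric] w_nonneg P_nonneg ennreal_leI)
  also have "\<dots> = ennreal (integral\<^sup>L lborel R)"
  proof (intro nn_integral_eq_integral AE_I2 R_int)
    fix z
    show "0 \<le> R z"
      using mult_nonneg_nonneg[OF w_nonneg[of z] P_nonneg[of "g z"]] wP_le[of z] by linarith
  qed
  also have "\<dots> \<le> ennreal (\<alpha> + \<beta> * m + \<gamma> * (m^2 + J))"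
    using R_le by (rule ennreal_leI)
  finally show ?thesis by (simp add: g_def J_def)
qed

lemma lipschitz_derivative_upper_bound:
  fixes H Hd :: "real \<Rightarrow> real" and S :: "real set"
  assumes S: "is_interval S"
    and der: "\<And>t. t \<in> S \<Longrightarrow> (H has_real_derivative Hd t) (at t within S)"
    and lip: "L-lipschitz_on S Hd"
    and x: "x \<in> S" and v: "v \<in> S"
  shows "H v \<le> H x + Hd x * (v - x) + L / 2 * (v - x)^2"
proof -
  define \<phi> where "\<phi> t = H t - Hd x * t - L / 2 * (t - x)^2" for t
  define \<phi>' where "\<phi>' t = Hd t - Hd x - L * (t - x)" for t
  have \<phi>_der: "(\<phi> has_derivative (\<lambda>h. \<phi>' t * h)) (at t within {a..b})"
    if "a \<in> S" "b \<in> S" "a \<le> t" "t \<le> b" for a b t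
  proof -
    have sub: "{a..b} \<subseteq> S"
      using mem_is_interval_1_I[OF S that(1,2)] by auto
    with that have "(H has_real_derivative Hd t) (at t within {a..b})"
      by (intro has_field_derivative_subset[OF der]) auto
    then have "(\<phi> has_real_derivative Hd t - Hd x * 1 - L / 2 * (2 * (t - x) * 1)) (at t within {a..b})"
      unfolding \<phi>_def by (intro derivative_eq_intros) auto
    then have "(\<phi> has_real_derivative \<phi>' t) (at t within {a..b})"
      by (simp add: \<phi>'_def algebra_simps)
    then show ?thesis
      by (simp add: has_field_derivative_def)
  qed
  obtain \<xi> where \<xi>: "\<xi> \<in> S" "0 \<le> (\<xi> - x) * (v - x)" "\<phi> v - \<phi> x = \<phi>' \<xi> * (v - x)"
  proof (cases "x \<le> v")
    case True
    with mvt_very_simple[OF True, of \<phi> "\<lambda>t h. \<phi>' t * h"] \<phi>_der[OF x v] obtain \<xi>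
      where \<xi>: "x \<le> \<xi>" "\<xi> \<le> v" "\<phi> v - \<phi> x = \<phi>' \<xi> * (v - x)"
      by auto
    show ?thesis
      by (rule that[of \<xi>]) (use \<xi> mem_is_interval_1_I[OF S x v] in auto)
  next
    case False
    then have "v \<le> x" by simp
    with mvt_very_simple[OF this, of \<phi> "\<lambda>t h. \<phi>' t * h"] \<phi>_der[OF v x] obtain \<xi>
      where \<xi>: "v \<le> \<xi>" "\<xi> \<le> x" "\<phi> x - \<phi> v = \<phi>' \<xi> * (x - v)"
      by auto
    show ?thesis
    proof (rule that[of \<xi>])
      show "\<xi> \<in> S"
        using \<xi> mem_is_interval_1_I[OF S v x] by auto
      show "0 \<le> (\<xi> - x) * (v - x)"
        using \<xi> by (intro mult_nonpos_nonpos) auto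
      show "\<phi> v - \<phi> x = \<phi>' \<xi> * (v - x)"
        using \<xi>(3) by (simp add: algebra_simps)
    qed
  qed
  have "(Hd \<xi> - Hd x) * (v - x) \<le> L * ((\<xi> - x) * (v - x))"
  proof -
    have "(Hd \<xi> - Hd x) * (v - x) \<le> \<bar>Hd \<xi> - Hd x\<bar> * \<bar>v - x\<bar>"
      by (metis abs_ge_self abs_mult)
    also have "\<dots> \<le> L * \<bar>\<xi> - x\<bar> * \<bar>v - x\<bar>"
      using lipschitz_onD[OF lip \<xi>(1) x] by (intro mult_right_mono) (auto simp: dist_real_def)
    also have "\<dots> = L * ((\<xi> - x) * (v - x))"
      using \<xi>(2) by (simp add: abs_mult[symmetric])
    finally show ?thesis .
  qed
  then have "\<phi> v \<le> \<phi> x"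
    using \<xi>(3) by (simp add: \<phi>'_def algebra_simps)
  then show ?thesis
    by (simp add: \<phi>_def algebra_simps)
qed

lemma projected_step_three_point:
  fixes x y p g d Hp Hy L eta :: real
  assumes eta: "0 < eta" and L: "L < 1 / eta"
    and smooth: "Hp - Hy \<le> d * (p - y) + L / 2 * (p - x)^2"
    and proj: "(y - p) * (x - eta * g - p) \<le> 0"
  shows "(p - y)^2 / (2 * eta) + (Hp - Hy)
      \<le> (x - y)^2 / (2 * eta) + (d - g) * (x - y) + (d - g)^2 / (2 * (1 / eta - L))"
proof -
  define c where "c = 1 / eta - L"
  have c: "0 < c" and L_eq: "L = 1 / eta - c"
    using L by (simp_all add: c_def)
  have "0 \<le> - g * (p - y) - (p - y) * (p - x) / eta"
  proof -
    have "((p - y) * (p - x) + eta * (g * (p - y))) / eta \<le> 0"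
      using proj eta by (intro divide_nonpos_pos) (auto simp: algebra_simps)
    then show ?thesis
      using eta by (simp add: field_simps)
  qed
  moreover have "0 \<le> (c * (p - x) - (d - g))^2 / (2 * c)"
    using c by simp
  moreover have "(x - y)^2 / (2 * eta) + (d - g) * (x - y) + (d - g)^2 / (2 * c)
      - ((p - y)^2 / (2 * eta) + d * (p - y) + L / 2 * (p - x)^2)
      = (- g * (p - y) - (p - y) * (p - x) / eta) + (c * (p - x) - (d - g))^2 / (2 * c)"
    unfolding L_eq using eta c by (simp add: field_simps power2_eq_square)
  ultimately show ?thesis
    using smooth unfolding c_def by linarith
qed

section \<open>Projection onto the feasible interval\<close>

lemma is_interval_feas: "is_interval (feas l u)"
  unfolding is_interval_1 feas_def by (auto; meson ereal_less_eq(3) order_trans)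

lemma feas_borel [measurable]: "feas l u \<in> sets borel"
  unfolding feas_def by measurable

lemma proj_measurable [measurable]: "proj l u \<in> borel_measurable borel"
  unfolding proj_def[abs_def] by measurable

lemma proj_in_feas:
  assumes "feas l u \<noteq> {}"
  shows "proj l u y \<in> feas l u"
proof -
  obtain s where "l \<le> ereal s" "ereal s \<le> u"
    using assms by (auto simp: feas_def)
  then show ?thesis
    by (cases l; cases u) (auto simp: proj_def feas_def max_def min_def)
qed

lemma proj_variational_ineq:
  assumes "v \<in> feas l u"
  shows "(v - proj l u y) * (y - proj l u y) \<le> 0"
  using assms
  by (cases l; cases u) (auto simp: proj_def feas_def max_def min_def mult_nonneg_nonpos mult_nonpos_nonneg)

lemma proj_dist_le:
  assumes "v \<in> feas l u"
  shows "(proj l u y - v)^2 \<le> (y - v)^2"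
proof -
  have "(y - v)^2 = (proj l u y - v)^2 + (y - proj l u y)^2 - 2 * ((v - proj l u y) * (y - proj l u y))"
    by (simp add: power2_eq_square algebra_simps)
  then show ?thesis
    using proj_variational_ineq[OF assms, of y] zero_le_power2[of "y - proj l u y"] by linarith
qed

lemma proj_gradient_step_smooth_le:
  fixes H Hd :: "real \<Rightarrow> real" and x y g eta L :: real
  assumes H_der: "\<And>t. t \<in> feas l u \<Longrightarrow> (H has_real_derivative Hd t) (at t within feas l u)"
    and lip: "L-lipschitz_on (feas l u) Hd"
    and H_conv: "\<And>a b. a \<in> feas l u \<Longrightarrow> b \<in> feas l u \<Longrightarrow> H a + Hd a * (b - a) \<le> H b"
    and x: "x \<in> feas l u" and y: "y \<in> feas l u" and eta: "0 < eta" and L: "L < 1 / eta"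
  defines "p \<equiv> proj l u (x - eta * g)"
  shows "(p - y)^2 / (2 * eta) + (H p - H y)
      \<le> (x - y)^2 / (2 * eta) + (Hd x - g) * (x - y) + (Hd x - g)^2 / (2 * (1 / eta - L))"
proof (rule projected_step_three_point[OF eta L])
  have p: "p \<in> feas l u"
    unfolding p_def using x by (intro proj_in_feas) auto
  have "H p \<le> H x + Hd x * (p - x) + L / 2 * (p - x)^2"
    by (rule lipschitz_derivative_upper_bound[OF is_interval_feas H_der lip x p])
  moreover have "H x - H y \<le> Hd x * (x - y)"
    using H_conv[OF x y] by (simp add: algebra_simps)
  ultimately show "H p - H y \<le> Hd x * (p - y) + L / 2 * (p - x)^2"
    by (simp add: algebra_simps)
  show "(y - p) * (x - eta * g - p) \<le> 0"
    unfolding p_def by (rule proj_variational_ineq[OF y])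
qed

section \<open>Potential functions along the chain\<close>

lemma sets_cba_run:
  assumes "\<And>x. sets (K x) = sets borel"
  shows "sets (cba_run K n x s) = sets (borel :: (real \<times> real) measure)"
proof (induction n arbitrary: x s)
  case (Suc n)
  have "space (K x) \<noteq> {}"
    using sets_eq_imp_space_eq[OF assms[of x]] by simp
  then show ?case
    using Suc.IH by (auto intro!: sets_bind)
qed simp

lemma convex_weighted_mean_le:
  fixes H Hd :: "real \<Rightarrow> real" and k :: nat
  assumes H_conv: "\<And>a b. a \<in> S \<Longrightarrow> b \<in> S \<Longrightarrow> H a + Hd a * (b - a) \<le> H b"
    and m: "m \<in> S" and x: "x \<in> S" and mean: "(real k * m + x) / real (Suc k) \<in> S"
  shows "real (Suc k) * H ((real k * m + x) / real (Suc k)) \<le> real k * H m + H x"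
proof -
  define m' where "m' = (real k * m + x) / real (Suc k)"
  have "real k * (H m' + Hd m' * (m - m')) \<le> real k * H m"
    using H_conv[OF mean[folded m'_def] m] by (intro mult_left_mono) auto
  moreover have "H m' + Hd m' * (x - m') \<le> H x"
    using H_conv[OF mean[folded m'_def] x] .
  moreover have "real k * (m - m') + (x - m') = 0"
    by (simp add: m'_def field_simps del: of_nat_Suc) (simp add: algebra_simps)
  then have "Hd m' * (real k * (m - m')) + Hd m' * (x - m') = 0"
    by (metis distrib_left mult_zero_right)
  ultimately have "real (Suc k) * H m' \<le> real k * H m + H x"
    by (simp add: algebra_simps)
  then show ?thesis
    by (simp add: m'_def)
qed

text \<open>The running sum of the first \<open>k\<close> iterates is written as \<open>k * m\<close> with \<open>m \<in> S\<close> their mean, so that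
  convexity of \<open>H\<close> can be applied to the mean at each step. Points outside \<open>S\<close> are charged \<open>\<infinity>\<close>, so
  the hypothesis on \<open>\<Phi>\<close> also forces the chain to stay in \<open>S\<close>.\<close>

lemma nn_integral_cba_run_le:
  fixes K :: "real \<Rightarrow> real measure" and S :: "real set" and H Hd :: "real \<Rightarrow> real"
    and \<Phi> :: "nat \<Rightarrow> real \<Rightarrow> real" and T :: nat
  assumes sets_K: "\<And>x. sets (K x) = sets borel"
    and S: "convex S" "S \<in> sets borel"
    and H_cont: "continuous_on S H"
    and H_conv: "\<And>a b. a \<in> S \<Longrightarrow> b \<in> S \<Longrightarrow> H a + Hd a * (b - a) \<le> H b"
    and y_min: "\<And>v. v \<in> S \<Longrightarrow> H y \<le> H v"
    and \<Phi>_meas: "\<And>n. \<Phi> n \<in> borel_measurable borel"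
    and \<Phi>_nonneg: "\<And>n v. v \<in> S \<Longrightarrow> 0 \<le> \<Phi> n v"
    and \<Phi>_step: "\<And>n x c. x \<in> S \<Longrightarrow> 0 \<le> c \<Longrightarrow>
      (\<integral>\<^sup>+v. (if v \<in> S then ennreal (c + \<Phi> n v) else \<infinity>) \<partial>K x)
        \<le> ennreal (c + \<Phi> (Suc n) x - (H x - H y))"
    and T: "0 < T"
  defines "G \<equiv> \<lambda>p. if snd p / real T \<in> S then ennreal (H (snd p / real T) - H y) else \<infinity>"
  shows "x \<in> S \<Longrightarrow> m \<in> S \<Longrightarrow> k + n = T \<Longrightarrow>
    (\<integral>\<^sup>+p. G p \<partial>cba_run K n x (real k * m)) \<le> ennreal ((real k * (H m - H y) + \<Phi> n x) / real T)"
proof (induction n arbitrary: k x m)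
  define H' where "H' v = indicator S v *\<^sub>R H v" for v
  have [measurable]: "H' \<in> borel_measurable borel" "S \<in> sets borel"
    unfolding H'_def by (rule borel_measurable_continuous_on_indicator[OF S(2) H_cont], rule S(2))
  have [measurable]: "(\<lambda>p::real \<times> real. snd p / real T) \<in> borel_measurable borel"
    by (intro borel_measurable_continuous_onI continuous_intros) (use T in simp)
  have "G = (\<lambda>p. if snd p / real T \<in> S then ennreal (H' (snd p / real T) - H y) else \<infinity>)"
    by (auto simp: G_def H'_def fun_eq_iff)
  also have "\<dots> \<in> borel_measurable borel"
    by measurable
  finally have G_meas: "G \<in> borel_measurable borel" .
  {
    case 0
    then have "(\<integral>\<^sup>+p. G p \<partial>cba_run K 0 x (real k * m)) = G (x, real T * m)"
      using G_meas by (simp add: nn_integral_return)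
    also have "\<dots> \<le> ennreal ((real k * (H m - H y) + \<Phi> 0 x) / real T)"
      using 0 \<Phi>_nonneg[of x 0] T by (auto simp: G_def field_simps intro!: ennreal_leI)
    finally show ?case .
  next
    case (Suc n)
    define m' where "m' = (real k * m + x) / real (Suc k)"
    have m': "m' \<in> S"
      using convexD[OF S(1) Suc.prems(2,1), of "real k / real (Suc k)" "1 / real (Suc k)"]
      by (simp add: m'_def field_simps del: of_nat_Suc)
    define c where "c = real (Suc k) * (H m' - H y)"
    have c: "0 \<le> c"
      using y_min[OF m'] by (simp add: c_def)
    have "(\<integral>\<^sup>+p. G p \<partial>cba_run K (Suc n) x (real k * m))
        = (\<integral>\<^sup>+p. G p \<partial>(K x \<bind> (\<lambda>x'. cba_run K n x' (real (Suc k) * m'))))"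
      by (simp add: m'_def del: of_nat_Suc)
    also have "\<dots> \<le> (\<integral>\<^sup>+x'. (\<integral>\<^sup>+p. G p \<partial>cba_run K n x' (real (Suc k) * m')) \<partial>K x)"
      using sets_eq_imp_space_eq[OF sets_K[of x]] G_meas
      by (intro nn_integral_bind_le[where R=borel]) (simp_all add: sets_cba_run sets_K)
    also have "\<dots> \<le> (\<integral>\<^sup>+x'. ennreal (1 / real T) * (if x' \<in> S then ennreal (c + \<Phi> n x') else \<infinity>) \<partial>K x)"
      using Suc.IH[OF _ m', of _ "Suc k"] Suc.prems(3) T
      by (intro nn_integral_mono)
        (simp add: c_def ennreal_mult'[symmetric] add_divide_distrib del: of_nat_Suc)
    also have "\<dots> = ennreal (1 / real T) * (\<integral>\<^sup>+x'. (if x' \<in> S then ennreal (c + \<Phi> n x') else \<infinity>) \<partial>K x)"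
      using S(2) \<Phi>_meas by (intro nn_integral_cmult) (simp add: measurable_cong_sets[OF sets_K refl])
    also have "\<dots> \<le> ennreal (1 / real T) * ennreal (c + \<Phi> (Suc n) x - (H x - H y))"
      using \<Phi>_step[OF Suc.prems(1) c] by (rule mult_left_mono) simp
    also have "\<dots> \<le> ennreal ((real k * (H m - H y) + \<Phi> (Suc n) x) / real T)"
      using convex_weighted_mean_le[OF H_conv Suc.prems(2,1), of k] m' T
      by (simp add: c_def m'_def ennreal_mult'[symmetric] del: of_nat_Suc)
        (intro ennreal_leI divide_right_mono; simp add: algebra_simps)
    finally show ?case .
  }
qed

lemma cba_run_potential_bound:
  fixes K :: "real \<Rightarrow> real measure" and S :: "real set" and H Hd :: "real \<Rightarrow> real"
    and \<Phi> :: "nat \<Rightarrow> real \<Rightarrow> real" and T :: nat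
  assumes sets_K: "\<And>x. sets (K x) = sets borel"
    and S: "convex S" "S \<in> sets borel"
    and H_cont: "continuous_on S H"
    and H_conv: "\<And>a b. a \<in> S \<Longrightarrow> b \<in> S \<Longrightarrow> H a + Hd a * (b - a) \<le> H b"
    and y_min: "\<And>v. v \<in> S \<Longrightarrow> H y \<le> H v"
    and \<Phi>_meas: "\<And>n. \<Phi> n \<in> borel_measurable borel"
    and \<Phi>_nonneg: "\<And>n v. v \<in> S \<Longrightarrow> 0 \<le> \<Phi> n v"
    and \<Phi>_step: "\<And>n x c. x \<in> S \<Longrightarrow> 0 \<le> c \<Longrightarrow>
      (\<integral>\<^sup>+v. (if v \<in> S then ennreal (c + \<Phi> n v) else \<infinity>) \<partial>K x)
        \<le> ennreal (c + \<Phi> (Suc n) x - (H x - H y))"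
    and x1: "x1 \<in> S" and T: "0 < T"
  shows "(\<integral>p. H (snd p / real T) - H y \<partial>cba_run K T x1 0) \<le> \<Phi> T x1 / real T"
proof -
  have "(\<integral>\<^sup>+p. ennreal (H (snd p / real T) - H y) \<partial>cba_run K T x1 0)
      \<le> (\<integral>\<^sup>+p. (if snd p / real T \<in> S then ennreal (H (snd p / real T) - H y) else \<infinity>) \<partial>cba_run K T x1 0)"
    by (intro nn_integral_mono) simp
  also have "\<dots> \<le> ennreal (\<Phi> T x1 / real T)"
    using nn_integral_cba_run_le[where \<Phi>=\<Phi>, OF sets_K S H_cont H_conv y_min \<Phi>_meas \<Phi>_nonneg \<Phi>_step T x1 x1, of 0]
    by simp
  finally show ?thesis
    using \<Phi>_nonneg[OF x1, of T] T by (intro integral_real_bounded) auto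
qed

section \<open>The comparison-based gradient estimator\<close>

locale cba =
  fixes D :: "real measure" and hx hxz fm fp :: "real \<Rightarrow> real \<Rightarrow> real"
    and hm hp Hd :: "real \<Rightarrow> real" and l u :: ereal and K3 eta :: real
  assumes D_prob: "prob_space D" and D_sets [measurable_cong]: "sets D = sets borel"
    and A1: "\<And>x. measure D {x} = 0"
    and A2_hm: "\<And>x. x \<in> feas l u \<Longrightarrow> ((\<lambda>z. hx x z) \<longlongrightarrow> hm x) (at_left x)"
    and A2_hp: "\<And>x. x \<in> feas l u \<Longrightarrow> ((\<lambda>z. hx x z) \<longlongrightarrow> hp x) (at_right x)"
    and A3: "\<And>x \<xi>. x \<in> feas l u \<Longrightarrow> x \<noteq> \<xi> \<Longrightarrow>
      ((\<lambda>z. hx x z) has_real_derivative hxz x \<xi>) (at \<xi>)"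
    and A4_grad: "\<And>x. x \<in> feas l u \<Longrightarrow> integrable D (hx x) \<and> (\<integral>\<xi>. hx x \<xi> \<partial>D) = Hd x"
    and C1_nonneg: "\<And>x z. x \<in> feas l u \<Longrightarrow> 0 \<le> fm x z"
    and C1_meas: "\<And>x. x \<in> feas l u \<Longrightarrow> fm x \<in> borel_measurable borel"
    and C1_zero: "\<And>x z. x \<in> feas l u \<Longrightarrow> x \<le> z \<Longrightarrow> fm x z = 0"
    and C1_pos: "\<And>x z. x \<in> feas l u \<Longrightarrow> Inf (ereal ` supp_meas D) \<le> ereal z \<Longrightarrow> z < x \<Longrightarrow> 0 < fm x z"
    and C1_int: "\<And>x. x \<in> feas l u \<Longrightarrow> (\<integral>\<^sup>+z. ennreal (fm x z) \<partial>lborel) = 1"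
    and C2_nonneg: "\<And>x z. x \<in> feas l u \<Longrightarrow> 0 \<le> fp x z"
    and C2_meas: "\<And>x. x \<in> feas l u \<Longrightarrow> fp x \<in> borel_measurable borel"
    and C2_zero: "\<And>x z. x \<in> feas l u \<Longrightarrow> z \<le> x \<Longrightarrow> fp x z = 0"
    and C2_pos: "\<And>x z. x \<in> feas l u \<Longrightarrow> ereal z \<le> Sup (ereal ` supp_meas D) \<Longrightarrow> x < z \<Longrightarrow> 0 < fp x z"
    and C2_int: "\<And>x. x \<in> feas l u \<Longrightarrow> (\<integral>\<^sup>+z. ennreal (fp x z) \<partial>lborel) = 1"
    and C3_nonneg: "0 \<le> K3"
    and C3_left: "\<And>x. x \<in> feas l u \<Longrightarrow>
      (\<integral>\<^sup>+z \<in> {z. Inf (ereal ` supp_meas D) \<le> ereal z \<and> z < x}.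
        ennreal (cdf_of D z * (hxz x z)^2 / fm x z) \<partial>lborel) \<le> ennreal K3"
    and C3_right: "\<And>x. x \<in> feas l u \<Longrightarrow>
      (\<integral>\<^sup>+z \<in> {z. x < z \<and> ereal z \<le> Sup (ereal ` supp_meas D)}.
        ennreal ((1 - cdf_of D z) * (hxz x z)^2 / fp x z) \<partial>lborel) \<le> ennreal K3"
    and feas_nonempty: "feas l u \<noteq> {}"
begin

sublocale prob_space D
  by (rule D_prob)

abbreviation "S \<equiv> feas l u"
abbreviation "K \<equiv> cba_step D fm fp hm hp hxz eta l u"

lemma space_D [simp]: "space D = UNIV"
  using sets_eq_imp_space_eq[OF D_sets] by simp

lemma hx_measurable: "x \<in> S \<Longrightarrow> hx x \<in> borel_measurable borel"
  using A4_grad[of x] measurable_cong_sets[OF D_sets refl] by (auto dest: borel_measurable_integrable)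

lemma hxz_measurable: "x \<in> S \<Longrightarrow> hxz x \<in> borel_measurable borel"
  by (rule borel_measurable_derivative[OF hx_measurable A3]) auto

lemma emeasure_atMost_below_supp:
  assumes "ereal z < Inf (ereal ` supp_meas D)"
  shows "emeasure D {..z} = 0"
proof -
  have "AE \<xi> in D. \<xi> \<notin> {..z}"
    using AE_in_supp_meas[OF finite_measure_axioms D_sets]
  proof eventually_elim
    case (elim \<xi>)
    then have "ereal z < ereal \<xi>"
      by (intro order.strict_trans2[OF assms Inf_lower]) auto
    then show ?case by simp
  qed
  then show ?thesis
    by (subst (asm) AE_iff_measurable[of "{..z}"]) auto
qed

lemma emeasure_atLeast_above_supp:
  assumes "Sup (ereal ` supp_meas D) < ereal z"
  shows "emeasure D {z..} = 0"
proof -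
  have "AE \<xi> in D. \<xi> \<notin> {z..}"
    using AE_in_supp_meas[OF finite_measure_axioms D_sets]
  proof eventually_elim
    case (elim \<xi>)
    then have "ereal \<xi> < ereal z"
      by (intro order.strict_trans1[OF Sup_upper assms]) auto
    then show ?case by simp
  qed
  then show ?thesis
    by (subst (asm) AE_iff_measurable[of "{z..}"]) auto
qed

lemma measure_atLeast: "measure D {z..} = 1 - cdf_of D z"
proof -
  have "{z} \<in> null_sets D"
    using A1[of z] by (auto simp: null_sets_def emeasure_eq_measure)
  moreover have "{..<z} = {..z} - {z}"
    by auto
  ultimately have "measure D {..<z} = measure D {..z}"
    using measure_Diff_null_set[of "{..z}" D "{z}"] by simp
  moreover have "measure D {z..} = 1 - measure D {..<z}"
    using prob_compl[of "{..<z}"] by (simp add: Compl_eq_Diff_UNIV[symmetric])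
  ultimately show ?thesis
    by (simp add: cdf_of_def)
qed

text \<open>\<open>J_left x \<xi>\<close> (for \<open>\<xi> < x\<close>) and \<open>J_right x \<xi>\<close> (for \<open>x < \<xi>\<close>) bound the conditional variance of the
  gradient estimator given \<open>\<xi>\<close>.\<close>

definition J_left :: "real \<Rightarrow> real \<Rightarrow> ennreal" where
  "J_left x \<xi> = (\<integral>\<^sup>+z. ennreal (indicator {\<xi>..<x} z * (hxz x z ^ 2 / fm x z)) \<partial>lborel)"

definition J_right :: "real \<Rightarrow> real \<Rightarrow> ennreal" where
  "J_right x \<xi> = (\<integral>\<^sup>+z. ennreal (indicator {x<..\<xi>} z * (hxz x z ^ 2 / fp x z)) \<partial>lborel)"

lemma J_left_measurable:
  assumes x: "x \<in> S"
  shows "J_left x \<in> borel_measurable borel"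
proof -
  note [measurable] = C1_meas[OF x] hxz_measurable[OF x]
  have "(\<lambda>(\<xi>, z). ennreal (indicator {\<xi>..<x} z * (hxz x z ^ 2 / fm x z))) \<in> borel_measurable (borel \<Otimes>\<^sub>M borel)"
    unfolding indicator_def atLeastLessThan_iff by measurable
  then have "(\<lambda>(\<xi>, z). ennreal (indicator {\<xi>..<x} z * (hxz x z ^ 2 / fm x z))) \<in> borel_measurable (borel \<Otimes>\<^sub>M lborel)"
    by (simp add: measurable_cong_sets[OF sets_pair_measure_cong[OF refl sets_lborel] refl])
  then show ?thesis
    unfolding J_left_def[abs_def] by (rule lborel.borel_measurable_nn_integral)
qed

lemma J_right_measurable:
  assumes x: "x \<in> S"
  shows "J_right x \<in> borel_measurable borel"
proof -
  note [measurable] = C2_meas[OF x] hxz_measurable[OF x]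
  have "(\<lambda>(\<xi>, z). ennreal (indicator {x<..\<xi>} z * (hxz x z ^ 2 / fp x z))) \<in> borel_measurable (borel \<Otimes>\<^sub>M borel)"
    unfolding indicator_def greaterThanAtMost_iff by measurable
  then have "(\<lambda>(\<xi>, z). ennreal (indicator {x<..\<xi>} z * (hxz x z ^ 2 / fp x z))) \<in> borel_measurable (borel \<Otimes>\<^sub>M lborel)"
    by (simp add: measurable_cong_sets[OF sets_pair_measure_cong[OF refl sets_lborel] refl])
  then show ?thesis
    unfolding J_right_def[abs_def] by (rule lborel.borel_measurable_nn_integral)
qed

text \<open>By Tonelli the weight of \<open>z\<close> becomes \<open>P(\<xi> \<le> z) = F z\<close>, which vanishes below the support of
  \<open>\<xi>\<close>; this is the integral bounded in (C3).\<close>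

lemma nn_integral_J_left_le:
  assumes x: "x \<in> S"
  shows "(\<integral>\<^sup>+\<xi>. indicator {..<x} \<xi> * J_left x \<xi> \<partial>D) \<le> ennreal K3"
proof -
  note [measurable] = C1_meas[OF x] hxz_measurable[OF x]
  define E where "E z = ennreal (hxz x z ^ 2 / fm x z)" for z
  have [measurable]: "E \<in> borel_measurable borel"
    unfolding E_def by measurable
  have "(\<integral>\<^sup>+\<xi>. indicator {..<x} \<xi> * J_left x \<xi> \<partial>D)
      = (\<integral>\<^sup>+\<xi>. \<integral>\<^sup>+z. indicator {z. \<xi> < x \<and> \<xi> \<le> z \<and> z < x} z * E z \<partial>lborel \<partial>D)"
    unfolding J_left_def E_def indicator_mult_ennreal[symmetric]
    by (intro nn_integral_cong) (auto simp: indicator_def)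
  also have "\<dots> = (\<integral>\<^sup>+z. emeasure D {\<xi>. \<xi> < x \<and> \<xi> \<le> z \<and> z < x} * E z \<partial>lborel)"
    by (rule nn_integral_indicator_swap[OF sigma_finite_measure_axioms D_sets]) measurable
  also have "\<dots> \<le> (\<integral>\<^sup>+z \<in> {z. Inf (ereal ` supp_meas D) \<le> ereal z \<and> z < x}.
      ennreal (cdf_of D z * (hxz x z)^2 / fm x z) \<partial>lborel)"
  proof (rule nn_integral_mono)
    fix z
    show "emeasure D {\<xi>. \<xi> < x \<and> \<xi> \<le> z \<and> z < x} * E z
        \<le> ennreal (cdf_of D z * (hxz x z)^2 / fm x z) * indicator {z. Inf (ereal ` supp_meas D) \<le> ereal z \<and> z < x} z"
    proof (cases "z < x")
      case True
      then have "{\<xi>. \<xi> < x \<and> \<xi> \<le> z \<and> z < x} = {..z}"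
        by auto
      moreover have "ennreal (cdf_of D z * (hxz x z)^2 / fm x z) = ennreal (cdf_of D z) * E z"
        using C1_nonneg[OF x, of z] by (simp add: E_def cdf_of_def ennreal_mult times_divide_eq_right[symmetric] del: times_divide_eq_right)
      ultimately show ?thesis
        using True emeasure_atMost_below_supp[of z]
        by (cases "Inf (ereal ` supp_meas D) \<le> ereal z") (auto simp: cdf_of_def emeasure_eq_measure not_le)
    qed simp
  qed
  also have "\<dots> \<le> ennreal K3"
    by (rule C3_left[OF x])
  finally show ?thesis .
qed

lemma nn_integral_J_right_le:
  assumes x: "x \<in> S"
  shows "(\<integral>\<^sup>+\<xi>. indicator {x<..} \<xi> * J_right x \<xi> \<partial>D) \<le> ennreal K3"
proof -
  note [measurable] = C2_meas[OF x] hxz_measurable[OF x]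
  define E where "E z = ennreal (hxz x z ^ 2 / fp x z)" for z
  have [measurable]: "E \<in> borel_measurable borel"
    unfolding E_def by measurable
  have "(\<integral>\<^sup>+\<xi>. indicator {x<..} \<xi> * J_right x \<xi> \<partial>D)
      = (\<integral>\<^sup>+\<xi>. \<integral>\<^sup>+z. indicator {z. x < \<xi> \<and> x < z \<and> z \<le> \<xi>} z * E z \<partial>lborel \<partial>D)"
    unfolding J_right_def E_def indicator_mult_ennreal[symmetric]
    by (intro nn_integral_cong) (auto simp: indicator_def)
  also have "\<dots> = (\<integral>\<^sup>+z. emeasure D {\<xi>. x < \<xi> \<and> x < z \<and> z \<le> \<xi>} * E z \<partial>lborel)"
    by (rule nn_integral_indicator_swap[OF sigma_finite_measure_axioms D_sets]) measurable
  also have "\<dots> \<le> (\<integral>\<^sup>+z \<in> {z. x < z \<and> ereal z \<le> Sup (ereal ` supp_meas D)}.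
      ennreal ((1 - cdf_of D z) * (hxz x z)^2 / fp x z) \<partial>lborel)"
  proof (rule nn_integral_mono)
    fix z
    show "emeasure D {\<xi>. x < \<xi> \<and> x < z \<and> z \<le> \<xi>} * E z
        \<le> ennreal ((1 - cdf_of D z) * (hxz x z)^2 / fp x z) * indicator {z. x < z \<and> ereal z \<le> Sup (ereal ` supp_meas D)} z"
    proof (cases "x < z")
      case True
      then have "{\<xi>. x < \<xi> \<and> x < z \<and> z \<le> \<xi>} = {z..}"
        by auto
      moreover have "0 \<le> 1 - cdf_of D z"
        using measure_atLeast[of z] measure_nonneg[of D "{z..}"] by simp
      then have "ennreal ((1 - cdf_of D z) * (hxz x z)^2 / fp x z) = ennreal (1 - cdf_of D z) * E z"
        using C2_nonneg[OF x, of z] by (simp add: E_def ennreal_mult times_divide_eq_right[symmetric] del: times_divide_eq_right)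
      ultimately show ?thesis
        using True emeasure_atLeast_above_supp[of z]
        by (cases "ereal z \<le> Sup (ereal ` supp_meas D)") (auto simp: measure_atLeast emeasure_eq_measure not_le)
    qed simp
  qed
  also have "\<dots> \<le> ennreal K3"
    by (rule C3_right[OF x])
  finally show ?thesis .
qed

lemma nn_integral_grad_minus_le:
  fixes P :: "real \<Rightarrow> real"
  assumes x: "x \<in> S" and \<xi>: "\<xi> < x" "Inf (ereal ` supp_meas D) \<le> ereal \<xi>"
    and J: "J_left x \<xi> \<noteq> \<infinity>"
    and P_meas: "P \<in> borel_measurable borel" and P_nonneg: "\<And>v. 0 \<le> P v"
    and P_le: "\<And>v. P v \<le> \<alpha> + \<beta> * v + \<gamma> * v^2" and \<gamma>: "0 \<le> \<gamma>"
  shows "(\<integral>\<^sup>+z. ennreal (fm x z) * ennreal (P (grad_minus hm hxz fm x \<xi> z)) \<partial>lborel)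
      \<le> ennreal (\<alpha> + \<beta> * hx x \<xi> + \<gamma> * ((hx x \<xi>)^2 + enn2real (J_left x \<xi>)))"
proof -
  note [measurable] = C1_meas[OF x] hxz_measurable[OF x]
  have fm_pos: "0 < fm x z" if "z \<in> {\<xi>..<x}" for z
    using that order_trans[OF \<xi>(2) ereal_less_eq(3)[THEN iffD2]] by (intro C1_pos[OF x]) auto
  have "integrable lborel (\<lambda>z. indicator {\<xi>..<x} z * (hxz x z ^ 2 / fm x z))
      \<and> (\<integral>z. indicator {\<xi>..<x} z * (hxz x z ^ 2 / fm x z) \<partial>lborel) = enn2real (J_left x \<xi>)"
    using J C1_nonneg[OF x]
    by (subst nn_integral_eq_integrable[symmetric]) (auto simp: J_left_def ennreal_enn2real_if)
  then have sq: "set_integrable lborel {\<xi>..<x} (\<lambda>z. hxz x z ^ 2 / fm x z)"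
    and sq_eq: "(LINT z:{\<xi>..<x}|lborel. hxz x z ^ 2 / fm x z) = enn2real (J_left x \<xi>)"
    by (simp_all add: set_integrable_def set_lebesgue_integral_def)
  have fm_int: "integrable lborel (fm x)"
    using nn_integral_eq_integrable[of "fm x" lborel 1] C1_int[OF x] C1_nonneg[OF x] by auto
  have int: "set_integrable lborel {\<xi>..<x} (hxz x)"
    using set_integrable_of_weighted_square[OF fm_int C1_nonneg[OF x] _ fm_pos hxz_measurable[OF x], of "{\<xi>..<x}"] sq
    by simp
  have "(LINT z:{\<xi>..<x}|lborel. hxz x z) = (LINT z:{\<xi><..<x}|lborel. hxz x z)"
    using AE_lborel_singleton[of \<xi>] int set_integrable_subset[OF int, of "{\<xi><..<x}"]
    by (intro set_integral_cong_set)
      (auto simp: set_integrable_def set_borel_measurable_def dest: borel_measurable_integrable)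
  also have "\<dots> = hm x - hx x \<xi>"
  proof (rule set_integral_FTC_Ioo[OF \<xi>(1)])
    show "(hx x has_real_derivative hxz x z) (at z)" if "\<xi> < z" "z < x" for z
      using A3[OF x, of z] that by simp
    show "(hx x \<longlongrightarrow> hx x \<xi>) (at_right \<xi>)"
      using DERIV_isCont[OF A3[OF x, of \<xi>]] \<xi>(1) by (simp add: isCont_def filterlim_at_split)
    show "(hx x \<longlongrightarrow> hm x) (at_left x)"
      using A2_hm[OF x] by simp
    show "set_integrable lborel {\<xi><..<x} (hxz x)"
      by (rule set_integrable_subset[OF int]) auto
  qed
  finally have mean: "hm x + (LINT z:{\<xi>..<x}|lborel. - hxz x z) = hx x \<xi>"
    using set_integral_uminus[OF int] by simp
  have "grad_minus hm hxz fm x \<xi> z = (if z \<in> {\<xi>..<x} then hm x + - hxz x z / fm x z else hm x)" for z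
    using C1_zero[OF x, of z] by (auto simp: grad_minus_def)
  moreover have "(\<integral>\<^sup>+z. ennreal (fm x z) * ennreal (P (if z \<in> {\<xi>..<x} then hm x + - hxz x z / fm x z else hm x)) \<partial>lborel)
      \<le> ennreal (\<alpha> + \<beta> * (hm x + (LINT z:{\<xi>..<x}|lborel. - hxz x z))
        + \<gamma> * ((hm x + (LINT z:{\<xi>..<x}|lborel. - hxz x z))^2 + (LINT z:{\<xi>..<x}|lborel. (- hxz x z) ^ 2 / fm x z)))"
    using sq by (intro nn_integral_importance_estimator_le[OF C1_meas[OF x] C1_nonneg[OF x] C1_int[OF x] _ fm_pos
        _ _ P_meas P_nonneg P_le \<gamma>]) simp_all
  ultimately show ?thesis
    by (simp add: mean sq_eq)
qed

lemma nn_integral_grad_plus_le: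
  fixes P :: "real \<Rightarrow> real"
  assumes x: "x \<in> S" and \<xi>: "x < \<xi>" "ereal \<xi> \<le> Sup (ereal ` supp_meas D)"
    and J: "J_right x \<xi> \<noteq> \<infinity>"
    and P_meas: "P \<in> borel_measurable borel" and P_nonneg: "\<And>v. 0 \<le> P v"
    and P_le: "\<And>v. P v \<le> \<alpha> + \<beta> * v + \<gamma> * v^2" and \<gamma>: "0 \<le> \<gamma>"
  shows "(\<integral>\<^sup>+z. ennreal (fp x z) * ennreal (P (grad_plus hp hxz fp x \<xi> z)) \<partial>lborel)
      \<le> ennreal (\<alpha> + \<beta> * hx x \<xi> + \<gamma> * ((hx x \<xi>)^2 + enn2real (J_right x \<xi>)))"
proof -
  note [measurable] = C2_meas[OF x] hxz_measurable[OF x]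
  have fp_pos: "0 < fp x z" if "z \<in> {x<..\<xi>}" for z
    using that order_trans[OF ereal_less_eq(3)[THEN iffD2] \<xi>(2)] by (intro C2_pos[OF x]) auto
  have "integrable lborel (\<lambda>z. indicator {x<..\<xi>} z * (hxz x z ^ 2 / fp x z))
      \<and> (\<integral>z. indicator {x<..\<xi>} z * (hxz x z ^ 2 / fp x z) \<partial>lborel) = enn2real (J_right x \<xi>)"
    using J C2_nonneg[OF x]
    by (subst nn_integral_eq_integrable[symmetric]) (auto simp: J_right_def ennreal_enn2real_if)
  then have sq: "set_integrable lborel {x<..\<xi>} (\<lambda>z. hxz x z ^ 2 / fp x z)"
    and sq_eq: "(LINT z:{x<..\<xi>}|lborel. hxz x z ^ 2 / fp x z) = enn2real (J_right x \<xi>)"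
    by (simp_all add: set_integrable_def set_lebesgue_integral_def)
  have fp_int: "integrable lborel (fp x)"
    using nn_integral_eq_integrable[of "fp x" lborel 1] C2_int[OF x] C2_nonneg[OF x] by auto
  have int: "set_integrable lborel {x<..\<xi>} (hxz x)"
    using set_integrable_of_weighted_square[OF fp_int C2_nonneg[OF x] _ fp_pos hxz_measurable[OF x], of "{x<..\<xi>}"] sq
    by simp
  have "(LINT z:{x<..\<xi>}|lborel. hxz x z) = (LINT z:{x<..<\<xi>}|lborel. hxz x z)"
    using AE_lborel_singleton[of \<xi>] int set_integrable_subset[OF int, of "{x<..<\<xi>}"]
    by (intro set_integral_cong_set)
      (auto simp: set_integrable_def set_borel_measurable_def dest: borel_measurable_integrable)
  also have "\<dots> = hx x \<xi> - hp x"
  proof (rule set_integral_FTC_Ioo[OF \<xi>(1)])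
    show "(hx x has_real_derivative hxz x z) (at z)" if "x < z" "z < \<xi>" for z
      using A3[OF x, of z] that by simp
    show "(hx x \<longlongrightarrow> hp x) (at_right x)"
      using A2_hp[OF x] by simp
    show "(hx x \<longlongrightarrow> hx x \<xi>) (at_left \<xi>)"
      using DERIV_isCont[OF A3[OF x, of \<xi>]] \<xi>(1) by (simp add: isCont_def filterlim_at_split)
    show "set_integrable lborel {x<..<\<xi>} (hxz x)"
      by (rule set_integrable_subset[OF int]) auto
  qed
  finally have mean: "hp x + (LINT z:{x<..\<xi>}|lborel. hxz x z) = hx x \<xi>"
    by simp
  have "grad_plus hp hxz fp x \<xi> z = (if z \<in> {x<..\<xi>} then hp x + hxz x z / fp x z else hp x)" for z
    using C2_zero[OF x, of z] by (auto simp: grad_plus_def)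
  moreover have "(\<integral>\<^sup>+z. ennreal (fp x z) * ennreal (P (if z \<in> {x<..\<xi>} then hp x + hxz x z / fp x z else hp x)) \<partial>lborel)
      \<le> ennreal (\<alpha> + \<beta> * (hp x + (LINT z:{x<..\<xi>}|lborel. hxz x z))
        + \<gamma> * ((hp x + (LINT z:{x<..\<xi>}|lborel. hxz x z))^2 + (LINT z:{x<..\<xi>}|lborel. hxz x z ^ 2 / fp x z)))"
    using sq by (intro nn_integral_importance_estimator_le[OF C2_meas[OF x] C2_nonneg[OF x] C2_int[OF x] _ fp_pos
        _ _ P_meas P_nonneg P_le \<gamma>]) simp_all
  ultimately show ?thesis
    by (simp add: mean sq_eq)
qed

definition J :: "real \<Rightarrow> real \<Rightarrow> real" where
  "J x \<xi> = enn2real (if \<xi> < x then J_left x \<xi> else J_right x \<xi>)"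

lemma J_measurable: "x \<in> S \<Longrightarrow> J x \<in> borel_measurable borel"
  using J_left_measurable[of x] J_right_measurable[of x] unfolding J_def[abs_def] by measurable

lemma AE_J_finite:
  assumes x: "x \<in> S"
  shows "AE \<xi> in D. (\<xi> < x \<longrightarrow> J_left x \<xi> \<noteq> \<infinity>) \<and> (x < \<xi> \<longrightarrow> J_right x \<xi> \<noteq> \<infinity>)"
proof -
  note [measurable] = J_left_measurable[OF x] J_right_measurable[OF x]
  have meas: "(\<lambda>\<xi>. indicator {..<x} \<xi> * J_left x \<xi>) \<in> borel_measurable D"
    "(\<lambda>\<xi>. indicator {x<..} \<xi> * J_right x \<xi>) \<in> borel_measurable D"
    by measurable
  have fin: "(\<integral>\<^sup>+\<xi>. indicator {..<x} \<xi> * J_left x \<xi> \<partial>D) \<noteq> \<infinity>"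
    "(\<integral>\<^sup>+\<xi>. indicator {x<..} \<xi> * J_right x \<xi> \<partial>D) \<noteq> \<infinity>"
    using nn_integral_J_left_le[OF x] nn_integral_J_right_le[OF x] by (auto simp: top_unique)
  from nn_integral_PInf_AE[OF meas(1) fin(1)] nn_integral_PInf_AE[OF meas(2) fin(2)] show ?thesis
    by eventually_elim (auto simp: indicator_def)
qed

lemma integral_J_le:
  assumes x: "x \<in> S"
  shows "integrable D (J x)" and "(\<integral>\<xi>. J x \<xi> \<partial>D) \<le> 2 * K3"
proof -
  note [measurable] = J_measurable[OF x]
  have "ennreal (J x \<xi>) \<le> indicator {..<x} \<xi> * J_left x \<xi> + indicator {x<..} \<xi> * J_right x \<xi>" for \<xi>
    by (cases "\<xi> < x"; cases "\<xi> = x") (auto simp: J_def J_right_def ennreal_enn2real_if)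
  then have "(\<integral>\<^sup>+\<xi>. ennreal (J x \<xi>) \<partial>D)
      \<le> (\<integral>\<^sup>+\<xi>. indicator {..<x} \<xi> * J_left x \<xi> + indicator {x<..} \<xi> * J_right x \<xi> \<partial>D)"
    by (rule nn_integral_mono)
  also have "\<dots> = (\<integral>\<^sup>+\<xi>. indicator {..<x} \<xi> * J_left x \<xi> \<partial>D) + (\<integral>\<^sup>+\<xi>. indicator {x<..} \<xi> * J_right x \<xi> \<partial>D)"
    using J_left_measurable[OF x] J_right_measurable[OF x]
    by (intro nn_integral_add) auto
  also have "\<dots> \<le> ennreal (2 * K3)"
    using add_mono[OF nn_integral_J_left_le[OF x] nn_integral_J_right_le[OF x]] C3_nonneg
    by (simp add: ennreal_plus[symmetric] del: ennreal_plus)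
  finally have le: "(\<integral>\<^sup>+\<xi>. ennreal (J x \<xi>) \<partial>D) \<le> ennreal (2 * K3)" .
  then show "integrable D (J x)"
    by (intro integrableI_bounded) (auto simp: J_def top_unique elim: order.strict_trans1)
  show "(\<integral>\<xi>. J x \<xi> \<partial>D) \<le> 2 * K3"
    using le C3_nonneg by (intro integral_real_bounded) auto
qed

definition step_given :: "real \<Rightarrow> real \<Rightarrow> real measure" where
  "step_given x \<xi> = (if \<xi> < x
    then density lborel (\<lambda>z. ennreal (fm x z)) \<bind> (\<lambda>z. return borel (proj l u (x - eta * grad_minus hm hxz fm x \<xi> z)))
    else density lborel (\<lambda>z. ennreal (fp x z)) \<bind> (\<lambda>z. return borel (proj l u (x - eta * grad_plus hp hxz fp x \<xi> z))))"

lemma K_eq_bind_step_given: "K x = uniform_measure D {\<xi>. \<xi> \<noteq> x} \<bind> step_given x"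
  by (simp add: cba_step_def step_given_def[abs_def])

lemma sets_step_given: "sets (step_given x \<xi>) = sets borel"
  by (simp add: step_given_def sets_bind[where N=borel])

lemma sets_K: "sets (K x) = sets borel"
  unfolding K_eq_bind_step_given by (rule sets_bind[where N=borel]) (auto simp: sets_step_given)

lemma nn_integral_cba_step_le:
  fixes B s :: "real \<Rightarrow> ennreal"
  assumes B: "B \<in> borel_measurable borel" and s: "s \<in> borel_measurable borel"
    and le: "AE \<xi> in D. \<xi> \<noteq> x \<longrightarrow> (\<integral>\<^sup>+v. B v \<partial>step_given x \<xi>) \<le> s \<xi>"
  shows "(\<integral>\<^sup>+v. B v \<partial>K x) \<le> (\<integral>\<^sup>+\<xi>. s \<xi> \<partial>D)"
proof -
  let ?U = "uniform_measure D {\<xi>. \<xi> \<noteq> x}"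
  have "(\<integral>\<^sup>+v. B v \<partial>K x) \<le> (\<integral>\<^sup>+\<xi>. (\<integral>\<^sup>+v. B v \<partial>step_given x \<xi>) \<partial>?U)"
    unfolding K_eq_bind_step_given using B
    by (intro nn_integral_bind_le[where R=borel]) (auto simp: sets_step_given)
  also have "\<dots> \<le> (\<integral>\<^sup>+\<xi>. s \<xi> \<partial>?U)"
    using le by (intro nn_integral_mono_AE AE_uniform_measureI) auto
  also have "\<dots> = (\<integral>\<^sup>+\<xi>. s \<xi> * indicator {\<xi>. \<xi> \<noteq> x} \<xi> \<partial>D)"
  proof -
    have "emeasure D {\<xi>. \<xi> \<noteq> x} = 1"
      using prob_compl[of "{x}"] A1[of x] by (simp add: emeasure_eq_measure Compl_eq_Diff_UNIV[symmetric] Collect_neg_eq)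
    then show ?thesis
      using s by (subst nn_integral_uniform_measure) (auto simp: divide_ennreal_def)
  qed
  also have "\<dots> \<le> (\<integral>\<^sup>+\<xi>. s \<xi> \<partial>D)"
    by (intro nn_integral_mono) (auto simp: indicator_def)
  finally show ?thesis .
qed

lemma nn_integral_step_given:
  assumes x: "x \<in> S" and B [measurable]: "B \<in> borel_measurable borel"
  shows "(\<integral>\<^sup>+v. B v \<partial>step_given x \<xi>) = (if \<xi> < x
      then \<integral>\<^sup>+z. ennreal (fm x z) * B (proj l u (x - eta * grad_minus hm hxz fm x \<xi> z)) \<partial>lborel
      else \<integral>\<^sup>+z. ennreal (fp x z) * B (proj l u (x - eta * grad_plus hp hxz fp x \<xi> z)) \<partial>lborel)"
proof -
  note [measurable] = C1_meas[OF x] C2_meas[OF x] hxz_measurable[OF x]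
  have "(\<integral>\<^sup>+v. B v \<partial>(density lborel w \<bind> (\<lambda>z. return borel (f z)))) = (\<integral>\<^sup>+z. w z * B (f z) \<partial>lborel)"
    if [measurable]: "w \<in> borel_measurable borel" "f \<in> borel_measurable borel"
    for w :: "real \<Rightarrow> ennreal" and f :: "real \<Rightarrow> real"
    by (simp add: bind_return_distr' nn_integral_distr nn_integral_density)
  then show ?thesis
    by (simp add: step_given_def grad_minus_def grad_plus_def)
qed

text \<open>Conditionally on \<open>\<xi>\<close>, the estimator has mean \<open>h'_x(x, \<xi>)\<close> and second moment at most
  \<open>h'_x(x, \<xi>)\<^sup>2 + J x \<xi>\<close>. Since it need not be integrable, this is stated for test functions with
  a quadratic majorant.\<close>

lemma AE_step_given_quadratic_bound:
  fixes \<Psi> :: "real \<Rightarrow> real"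
  assumes x: "x \<in> S" and \<gamma>: "0 \<le> \<gamma>"
    and \<Psi>_meas: "\<Psi> \<in> borel_measurable borel" and \<Psi>_nonneg: "\<And>v. v \<in> S \<Longrightarrow> 0 \<le> \<Psi> v"
    and \<Psi>_le: "\<And>g. \<Psi> (proj l u (x - eta * g)) \<le> \<alpha> + \<beta> * g + \<gamma> * g^2"
  shows "AE \<xi> in D. \<xi> \<noteq> x \<longrightarrow> (\<integral>\<^sup>+v. (if v \<in> S then ennreal (\<Psi> v) else \<infinity>) \<partial>step_given x \<xi>)
      \<le> ennreal (\<alpha> + \<beta> * hx x \<xi> + \<gamma> * ((hx x \<xi>)^2 + J x \<xi>))"
  using AE_J_finite[OF x] AE_in_supp_meas[OF finite_measure_axioms D_sets]
proof eventually_elim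
  case (elim \<xi>)
  define P where "P g = \<Psi> (proj l u (x - eta * g))" for g
  have P_meas: "P \<in> borel_measurable borel"
    using \<Psi>_meas unfolding P_def by measurable
  have P_bounds: "0 \<le> P g" "P g \<le> \<alpha> + \<beta> * g + \<gamma> * g^2" for g
    using \<Psi>_nonneg[OF proj_in_feas[OF feas_nonempty]] \<Psi>_le by (simp_all add: P_def)
  have B_meas: "(\<lambda>v. if v \<in> S then ennreal (\<Psi> v) else \<infinity>) \<in> borel_measurable borel"
    using \<Psi>_meas by measurable
  have B_proj: "(if proj l u y \<in> S then ennreal (\<Psi> (proj l u y)) else \<infinity>) = ennreal (\<Psi> (proj l u y))" for y
    using proj_in_feas[OF feas_nonempty] by simp
  have "Inf (ereal ` supp_meas D) \<le> ereal \<xi>" "ereal \<xi> \<le> Sup (ereal ` supp_meas D)"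
    using elim by (auto intro: Inf_lower Sup_upper)
  then show ?case
    using elim nn_integral_grad_minus_le[OF x _ _ _ P_meas P_bounds \<gamma>, of \<xi>]
      nn_integral_grad_plus_le[OF x _ _ _ P_meas P_bounds \<gamma>, of \<xi>]
    by (auto simp: nn_integral_step_given[OF x B_meas] B_proj P_def J_def)
qed

lemma cba_step_quadratic_bound:
  fixes \<Psi> :: "real \<Rightarrow> real"
  assumes x: "x \<in> S" and hx_sq: "integrable D (\<lambda>\<xi>. (hx x \<xi>)^2)" and \<gamma>: "0 \<le> \<gamma>"
    and \<Psi>_meas: "\<Psi> \<in> borel_measurable borel" and \<Psi>_nonneg: "\<And>v. v \<in> S \<Longrightarrow> 0 \<le> \<Psi> v"
    and \<Psi>_le: "\<And>g. \<Psi> (proj l u (x - eta * g)) \<le> \<alpha> + \<beta> * g + \<gamma> * g^2"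
  shows "(\<integral>\<^sup>+v. (if v \<in> S then ennreal (\<Psi> v) else \<infinity>) \<partial>K x)
      \<le> ennreal (\<alpha> + \<beta> * Hd x + \<gamma> * ((\<integral>\<xi>. (hx x \<xi>)^2 \<partial>D) + 2 * K3))"
proof -
  note [measurable] = \<Psi>_meas hx_measurable[OF x] J_measurable[OF x]
  define s where "s \<xi> = \<alpha> + \<beta> * hx x \<xi> + \<gamma> * ((hx x \<xi>)^2 + J x \<xi>)" for \<xi>
  have s_nonneg: "0 \<le> s \<xi>" for \<xi>
  proof -
    have "0 \<le> \<alpha> + \<beta> * hx x \<xi> + \<gamma> * (hx x \<xi>)^2"
      using order_trans[OF \<Psi>_nonneg[OF proj_in_feas[OF feas_nonempty]] \<Psi>_le] .
    moreover have "0 \<le> \<gamma> * J x \<xi>"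
      using \<gamma> by (simp add: J_def)
    ultimately show ?thesis
      unfolding s_def distrib_left by linarith
  qed
  have "(\<integral>\<^sup>+v. (if v \<in> S then ennreal (\<Psi> v) else \<infinity>) \<partial>K x) \<le> (\<integral>\<^sup>+\<xi>. ennreal (s \<xi>) \<partial>D)"
    using AE_step_given_quadratic_bound[OF x \<gamma> \<Psi>_meas \<Psi>_nonneg \<Psi>_le]
    by (intro nn_integral_cba_step_le) (simp_all add: s_def)
  also have "\<dots> = ennreal (\<integral>\<xi>. s \<xi> \<partial>D)"
    using A4_grad[OF x] hx_sq integral_J_le(1)[OF x] s_nonneg
    by (intro nn_integral_eq_integral) (auto simp: s_def)
  also have "\<dots> \<le> ennreal (\<alpha> + \<beta> * Hd x + \<gamma> * ((\<integral>\<xi>. (hx x \<xi>)^2 \<partial>D) + 2 * K3))"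
  proof (rule ennreal_leI)
    have "(\<integral>\<xi>. s \<xi> \<partial>D) = \<alpha> + \<beta> * Hd x + \<gamma> * ((\<integral>\<xi>. (hx x \<xi>)^2 \<partial>D) + (\<integral>\<xi>. J x \<xi> \<partial>D))"
      using A4_grad[OF x] hx_sq integral_J_le(1)[OF x] by (simp add: s_def prob_space[unfolded space_D])
    then show "(\<integral>\<xi>. s \<xi> \<partial>D) \<le> \<alpha> + \<beta> * Hd x + \<gamma> * ((\<integral>\<xi>. (hx x \<xi>)^2 \<partial>D) + 2 * K3)"
      using integral_J_le(2)[OF x] \<gamma> by (simp add: mult_left_mono)
  qed
  finally show ?thesis .
qed

lemma hx_second_moment_le:
  assumes x: "x \<in> S" and K: "(\<integral>\<^sup>+\<xi>. ennreal ((hx x \<xi>)^2) \<partial>D) \<le> ennreal (K1^2)"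
  shows "integrable D (\<lambda>\<xi>. (hx x \<xi>)^2) \<and> (\<integral>\<xi>. (hx x \<xi>)^2 \<partial>D) \<le> K1^2"
  using integral_le_of_nn_integral_le[OF _ _ K] hx_measurable[OF x] by (simp add: measurable_cong_sets[OF D_sets refl])

lemma hx_variance_le:
  assumes x: "x \<in> S" and K: "(\<integral>\<^sup>+\<xi>. ennreal ((hx x \<xi> - Hd x)^2) \<partial>D) \<le> ennreal (K2^2)"
  shows "integrable D (\<lambda>\<xi>. (hx x \<xi>)^2) \<and> (\<integral>\<xi>. (hx x \<xi>)^2 \<partial>D) - (Hd x)^2 \<le> K2^2"
proof -
  have var: "integrable D (\<lambda>\<xi>. (hx x \<xi> - Hd x)^2)" "(\<integral>\<xi>. (hx x \<xi> - Hd x)^2 \<partial>D) \<le> K2^2"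
    using integral_le_of_nn_integral_le[OF _ _ K] hx_measurable[OF x] by (simp_all add: measurable_cong_sets[OF D_sets refl])
  have "(\<lambda>\<xi>. (hx x \<xi>)^2) = (\<lambda>\<xi>. (hx x \<xi> - Hd x)^2 + 2 * Hd x * hx x \<xi> - (Hd x)^2)"
    by (simp add: fun_eq_iff power2_eq_square algebra_simps)
  then have sq: "integrable D (\<lambda>\<xi>. (hx x \<xi>)^2)"
    using var(1) A4_grad[OF x] by simp
  then show ?thesis
    using variance_eq[of "hx x"] var(2) A4_grad[OF x] by simp
qed

lemma cba_rate_bounded_gradient:
  fixes H :: "real \<Rightarrow> real" and T :: nat
  assumes T: "0 < T" and eta: "0 < eta" and x1: "x1 \<in> S"
    and y: "y \<in> S" and y_min: "\<And>v. v \<in> S \<Longrightarrow> H y \<le> H v"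
    and H_cont: "continuous_on S H" and H_conv: "\<And>a b. a \<in> S \<Longrightarrow> b \<in> S \<Longrightarrow> H a + Hd a * (b - a) \<le> H b"
    and hx_sq: "\<And>x. x \<in> S \<Longrightarrow> integrable D (\<lambda>\<xi>. (hx x \<xi>)^2) \<and> (\<integral>\<xi>. (hx x \<xi>)^2 \<partial>D) \<le> K1^2"
  shows "(\<integral>p. H (snd p / real T) - H y \<partial>cba_run K T x1 0)
      \<le> (x1 - y)^2 / (2 * eta * real T) + eta * (K1^2 + 2 * K3) / 2"
proof -
  define C where "C = eta * (K1^2 + 2 * K3) / 2"
  have C: "0 \<le> C"
    using eta C3_nonneg by (simp add: C_def)
  define \<Phi> where "\<Phi> n v = (v - y)^2 / (2 * eta) + real n * C" for n v
  have "(\<integral>p. H (snd p / real T) - H y \<partial>cba_run K T x1 0) \<le> \<Phi> T x1 / real T"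
  proof (rule cba_run_potential_bound[OF sets_K is_interval_convex[OF is_interval_feas] feas_borel H_cont H_conv y_min _ _ _ x1 T])
    show "\<Phi> n \<in> borel_measurable borel" for n
      unfolding \<Phi>_def by measurable
    show "0 \<le> \<Phi> n v" for n v
      using eta C by (simp add: \<Phi>_def)
    fix n :: nat and x c :: real
    assume x: "x \<in> S" and c: "0 \<le> c"
    have "(c + \<Phi> n (proj l u (x - eta * g))) \<le> (c + (x - y)^2 / (2 * eta) + real n * C) + (- (x - y)) * g + eta / 2 * g^2" for g
    proof -
      have "(proj l u (x - eta * g) - y)^2 / (2 * eta) \<le> (x - eta * g - y)^2 / (2 * eta)"
        using proj_dist_le[OF y] eta by (intro divide_right_mono) auto
      also have "\<dots> = (x - y)^2 / (2 * eta) + (- (x - y)) * g + eta / 2 * g^2"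
        using eta by (simp add: field_simps power2_eq_square)
      finally show ?thesis
        by (simp add: \<Phi>_def)
    qed
    then have "(\<integral>\<^sup>+v. (if v \<in> S then ennreal (c + \<Phi> n v) else \<infinity>) \<partial>K x)
        \<le> ennreal ((c + (x - y)^2 / (2 * eta) + real n * C) + (- (x - y)) * Hd x + eta / 2 * ((\<integral>\<xi>. (hx x \<xi>)^2 \<partial>D) + 2 * K3))"
      using hx_sq[OF x] eta c C
      by (intro cba_step_quadratic_bound[OF x]) (auto simp: \<Phi>_def)
    also have "\<dots> \<le> ennreal (c + \<Phi> (Suc n) x - (H x - H y))"
    proof (rule ennreal_leI)
      have "eta / 2 * ((\<integral>\<xi>. (hx x \<xi>)^2 \<partial>D) + 2 * K3) \<le> C"
        using hx_sq[OF x] eta by (simp add: C_def)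
      moreover have "H x - H y \<le> Hd x * (x - y)"
        using H_conv[OF x y] by (simp add: algebra_simps)
      ultimately show "(c + (x - y)^2 / (2 * eta) + real n * C) + (- (x - y)) * Hd x + eta / 2 * ((\<integral>\<xi>. (hx x \<xi>)^2 \<partial>D) + 2 * K3)
          \<le> c + \<Phi> (Suc n) x - (H x - H y)"
        by (simp add: \<Phi>_def algebra_simps)
    qed
    finally show "(\<integral>\<^sup>+v. (if v \<in> S then ennreal (c + \<Phi> n v) else \<infinity>) \<partial>K x) \<le> ennreal (c + \<Phi> (Suc n) x - (H x - H y))" .
  qed
  also have "\<Phi> T x1 / real T = (x1 - y)^2 / (2 * eta * real T) + eta * (K1^2 + 2 * K3) / 2"
    using T by (simp add: \<Phi>_def C_def field_simps)
  finally show ?thesis .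
qed

lemma cba_rate_smooth:
  fixes H :: "real \<Rightarrow> real" and T :: nat
  assumes T: "0 < T" and eta: "0 < eta" and x1: "x1 \<in> S"
    and y: "y \<in> S" and y_min: "\<And>v. v \<in> S \<Longrightarrow> H y \<le> H v"
    and H_cont: "continuous_on S H" and H_conv: "\<And>a b. a \<in> S \<Longrightarrow> b \<in> S \<Longrightarrow> H a + Hd a * (b - a) \<le> H b"
    and H_der: "\<And>t. t \<in> S \<Longrightarrow> (H has_real_derivative Hd t) (at t within S)"
    and lip: "L-lipschitz_on S Hd" and eta_L: "eta * L < 1"
    and hx_var: "\<And>x. x \<in> S \<Longrightarrow> integrable D (\<lambda>\<xi>. (hx x \<xi>)^2) \<and> (\<integral>\<xi>. (hx x \<xi>)^2 \<partial>D) - (Hd x)^2 \<le> K2^2"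
  shows "(\<integral>p. H (snd p / real T) - H y \<partial>cba_run K T x1 0)
      \<le> (x1 - y)^2 / (2 * eta * real T) + (H x1 - H y) / real T + (K2^2 + 2 * K3) / (1 / eta - L)"
proof -
  define c' where "c' = 1 / eta - L"
  have c': "0 < c'"
    using eta_L eta by (simp add: c'_def field_simps)
  define C where "C = (K2^2 + 2 * K3) / (2 * c')"
  have C: "0 \<le> C"
    using c' C3_nonneg by (simp add: C_def)
  define H' where "H' v = indicator S v *\<^sub>R H v" for v
  have [measurable]: "H' \<in> borel_measurable borel"
    unfolding H'_def by (rule borel_measurable_continuous_on_indicator[OF feas_borel H_cont])
  \<comment> \<open>\<open>H'\<close> only makes the potential measurable; on \<open>S\<close> it is \<open>H\<close>.\<close>
  define \<Phi> where "\<Phi> n v = (v - y)^2 / (2 * eta) + (H' v - indicator S v * H y) + real n * C" for n v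
  have \<Phi>_S: "\<Phi> n v = (v - y)^2 / (2 * eta) + (H v - H y) + real n * C" if "v \<in> S" for n v
    using that by (simp add: \<Phi>_def H'_def)
  have \<Phi>_meas [measurable]: "\<Phi> n \<in> borel_measurable borel" for n
    unfolding \<Phi>_def by measurable
  have \<Phi>_nonneg: "0 \<le> \<Phi> n v" if "v \<in> S" for n v
    using that y_min[OF that] eta C by (simp add: \<Phi>_S)
  have "(\<integral>p. H (snd p / real T) - H y \<partial>cba_run K T x1 0) \<le> \<Phi> T x1 / real T"
  proof (rule cba_run_potential_bound[OF sets_K is_interval_convex[OF is_interval_feas] feas_borel H_cont H_conv y_min
        \<Phi>_meas \<Phi>_nonneg _ x1 T])
    fix n :: nat and x c :: real
    assume x: "x \<in> S" and c: "0 \<le> c"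
    define \<alpha> where "\<alpha> = c + real n * C + (x - y)^2 / (2 * eta) + Hd x * (x - y) + (Hd x)^2 / (2 * c')"
    define \<beta> where "\<beta> = - (x - y) - Hd x / c'"
    have \<Psi>_le: "c + \<Phi> n (proj l u (x - eta * g)) \<le> \<alpha> + \<beta> * g + 1 / (2 * c') * g^2" for g
    proof -
      have "L < 1 / eta"
        using c' by (simp add: c'_def)
      from proj_gradient_step_smooth_le[OF H_der lip H_conv x y eta this, of g]
      have "c + \<Phi> n (proj l u (x - eta * g))
          \<le> c + real n * C + (x - y)^2 / (2 * eta) + (Hd x - g) * (x - y) + (Hd x - g)^2 / (2 * c')"
        using \<Phi>_S[OF proj_in_feas[OF feas_nonempty], of n] by (simp add: c'_def)
      also have "\<dots> = \<alpha> + \<beta> * g + 1 / (2 * c') * g^2"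
        using c' by (simp add: \<alpha>_def \<beta>_def field_simps power2_eq_square)
      finally show ?thesis .
    qed
    have "(\<integral>\<^sup>+v. (if v \<in> S then ennreal (c + \<Phi> n v) else \<infinity>) \<partial>K x)
        \<le> ennreal (\<alpha> + \<beta> * Hd x + 1 / (2 * c') * ((\<integral>\<xi>. (hx x \<xi>)^2 \<partial>D) + 2 * K3))"
    proof (rule cba_step_quadratic_bound[OF x])
      show "(\<lambda>v. c + \<Phi> n v) \<in> borel_measurable borel"
        by measurable
    qed (use hx_var[OF x] c' c \<Phi>_nonneg \<Psi>_le in auto)
    also have "\<dots> \<le> ennreal (c + \<Phi> (Suc n) x - (H x - H y))"
    proof (rule ennreal_leI)
      have "\<alpha> + \<beta> * Hd x + 1 / (2 * c') * ((\<integral>\<xi>. (hx x \<xi>)^2 \<partial>D) + 2 * K3)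
          = c + real n * C + (x - y)^2 / (2 * eta) + ((\<integral>\<xi>. (hx x \<xi>)^2 \<partial>D) - (Hd x)^2 + 2 * K3) / (2 * c')"
        using c' by (simp add: \<alpha>_def \<beta>_def field_simps power2_eq_square)
      also have "\<dots> \<le> c + real n * C + (x - y)^2 / (2 * eta) + C"
        using hx_var[OF x] c' by (simp add: C_def divide_right_mono)
      also have "\<dots> = c + \<Phi> (Suc n) x - (H x - H y)"
        by (simp add: \<Phi>_S[OF x] algebra_simps)
      finally show "\<alpha> + \<beta> * Hd x + 1 / (2 * c') * ((\<integral>\<xi>. (hx x \<xi>)^2 \<partial>D) + 2 * K3) \<le> c + \<Phi> (Suc n) x - (H x - H y)" .
    qed
    finally show "(\<integral>\<^sup>+v. (if v \<in> S then ennreal (c + \<Phi> n v) else \<infinity>) \<partial>K x) \<le> ennreal (c + \<Phi> (Suc n) x - (H x - H y))" .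
  qed
  also have "\<Phi> T x1 / real T = (x1 - y)^2 / (2 * eta * real T) + (H x1 - H y) / real T + C"
    using T by (simp add: \<Phi>_S[OF x1] field_simps)
  also have "\<dots> \<le> (x1 - y)^2 / (2 * eta * real T) + (H x1 - H y) / real T + (K2^2 + 2 * K3) / (1 / eta - L)"
    using c' C3_nonneg by (simp add: C_def c'_def[symmetric] field_simps)
  finally show ?thesis .
qed

end

theorem lemma1:
  fixes D :: "real measure"
    and h hx hxz fm fp :: "real \<Rightarrow> real \<Rightarrow> real"
    and hm hp H Hd :: "real \<Rightarrow> real"
    and l u :: ereal
    and mu K1 K2 K3 L eta x1 xstar :: real
    and T :: nat
  defines "F \<equiv> cdf_of D"
    and "slo \<equiv> Inf (ereal ` supp_meas D)"
    and "shi \<equiv> Sup (ereal ` supp_meas D)"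
  assumes lu: "l \<le> u"
    (* the random variable xi and (A1) *)
    and D_prob: "prob_space D" and D_sets: "sets D = sets borel"
    and A1: "\<And>x. measure D {x} = 0"
    (* H(x) = E h(x,xi) *)
    and H_def: "\<And>x. x \<in> feas l u \<Longrightarrow> integrable D (h x) \<and> H x = (\<integral>xi. h x xi \<partial>D)"
    (* (A2) *)
    and A2_left: "\<And>xi. (\<forall>x\<in>{y \<in> feas l u. y < xi}.
          ((\<lambda>y. h y xi) has_real_derivative hx x xi) (at x within {y \<in> feas l u. y < xi}))
        \<and> continuous_on {y \<in> feas l u. y < xi} (\<lambda>y. hx y xi)"
    and A2_right: "\<And>xi. (\<forall>x\<in>{y \<in> feas l u. xi < y}.
          ((\<lambda>y. h y xi) has_real_derivative hx x xi) (at x within {y \<in> feas l u. xi < y}))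
        \<and> continuous_on {y \<in> feas l u. xi < y} (\<lambda>y. hx y xi)"
    and A2_hm: "\<And>x. x \<in> feas l u \<Longrightarrow> ((\<lambda>z. hx x z) \<longlongrightarrow> hm x) (at_left x)"
    and A2_hp: "\<And>x. x \<in> feas l u \<Longrightarrow> ((\<lambda>z. hx x z) \<longlongrightarrow> hp x) (at_right x)"
    (* (A3) *)
    and A3: "\<And>x xi. x \<in> feas l u \<Longrightarrow> x \<noteq> xi \<Longrightarrow>
        ((\<lambda>z. hx x z) has_real_derivative hxz x xi) (at xi)"
    (* (A4) *)
    and A4_diff: "\<And>x. x \<in> feas l u \<Longrightarrow> (H has_real_derivative Hd x) (at x within feas l u)"
    and A4_mu: "mu \<ge> 0"
    and A4_conv: "\<And>x y. x \<in> feas l u \<Longrightarrow> y \<in> feas l u \<Longrightarrow>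
        H y \<ge> H x + Hd x * (y - x) + mu / 2 * (y - x)^2"
    and A4_grad: "\<And>x. x \<in> feas l u \<Longrightarrow> integrable D (hx x) \<and> (\<integral>xi. hx x xi \<partial>D) = Hd x"
    (* (C1) *)
    and C1_nonneg: "\<And>x z. x \<in> feas l u \<Longrightarrow> fm x z \<ge> 0"
    and C1_meas: "\<And>x. x \<in> feas l u \<Longrightarrow> fm x \<in> borel_measurable borel"
    and C1_zero: "\<And>x z. x \<in> feas l u \<Longrightarrow> z \<ge> x \<Longrightarrow> fm x z = 0"
    and C1_pos: "\<And>x z. x \<in> feas l u \<Longrightarrow> slo \<le> ereal z \<Longrightarrow> z < x \<Longrightarrow> fm x z > 0"
    and C1_int: "\<And>x. x \<in> feas l u \<Longrightarrow> (\<integral>\<^sup>+ z. ennreal (fm x z) \<partial>lborel) = 1"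
    (* (C2) *)
    and C2_nonneg: "\<And>x z. x \<in> feas l u \<Longrightarrow> fp x z \<ge> 0"
    and C2_meas: "\<And>x. x \<in> feas l u \<Longrightarrow> fp x \<in> borel_measurable borel"
    and C2_zero: "\<And>x z. x \<in> feas l u \<Longrightarrow> z \<le> x \<Longrightarrow> fp x z = 0"
    and C2_pos: "\<And>x z. x \<in> feas l u \<Longrightarrow> ereal z \<le> shi \<Longrightarrow> x < z \<Longrightarrow> fp x z > 0"
    and C2_int: "\<And>x. x \<in> feas l u \<Longrightarrow> (\<integral>\<^sup>+ z. ennreal (fp x z) \<partial>lborel) = 1"
    (* (C3) *)
    and C3_K: "K3 \<ge> 0"
    and C3_left: "\<And>x. x \<in> feas l u \<Longrightarrow>
        (\<integral>\<^sup>+ z \<in> {z. slo \<le> ereal z \<and> z < x}. ennreal (F z * (hxz x z)^2 / fm x z) \<partial>lborel)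
          \<le> ennreal K3"
    and C3_right: "\<And>x. x \<in> feas l u \<Longrightarrow>
        (\<integral>\<^sup>+ z \<in> {z. x < z \<and> ereal z \<le> shi}. ennreal ((1 - F z) * (hxz x z)^2 / fp x z) \<partial>lborel)
          \<le> ennreal K3"
    (* CBA data, optimal solution *)
    and x1: "x1 \<in> feas l u"
    and T: "T \<ge> 1"
    and eta: "eta > 0"
    and opt: "xstar \<in> feas l u" "\<And>y. y \<in> feas l u \<Longrightarrow> H xstar \<le> H y"
  shows
    "((\<forall>x\<in>feas l u. (\<integral>\<^sup>+ xi. ennreal ((hx x xi)^2) \<partial>D) \<le> ennreal (K1^2)) \<longrightarrow>
        (\<integral>p. H (snd p / real T) - H xstar
            \<partial>cba_run (cba_step D fm fp hm hp hxz eta l u) T x1 0)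
          \<le> (x1 - xstar)^2 / (2 * eta * real T) + eta * (K1^2 + 2 * K3) / 2)
     \<and>
     ((L-lipschitz_on (feas l u) Hd \<and>
       (\<forall>x\<in>feas l u. (\<integral>\<^sup>+ xi. ennreal ((hx x xi - Hd x)^2) \<partial>D) \<le> ennreal (K2^2)) \<and>
       eta * L < 1) \<longrightarrow>
        (\<integral>p. H (snd p / real T) - H xstar
            \<partial>cba_run (cba_step D fm fp hm hp hxz eta l u) T x1 0)
          \<le> (x1 - xstar)^2 / (2 * eta * real T) + (H x1 - H xstar) / real T
             + (K2^2 + 2 * K3) / (1 / eta - L))"
proof -
  have "feas l u \<noteq> {}"
    using x1 by auto
  from cba.intro[OF D_prob D_sets A1 A2_hm A2_hp A3 A4_grad C1_nonneg C1_meas C1_zero C1_pos[unfolded slo_def]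
      C1_int C2_nonneg C2_meas C2_zero C2_pos[unfolded shi_def] C2_int C3_K C3_left[unfolded slo_def F_def]
      C3_right[unfolded shi_def F_def] this]
  interpret cba D hx hxz fm fp hm hp Hd l u K3 eta .
  have T_pos: "0 < T"
    using T by simp
  have H_cont: "continuous_on (feas l u) H"
    using A4_diff by (auto simp: continuous_on_eq_continuous_within intro: DERIV_continuous)
  have H_conv: "H a + Hd a * (b - a) \<le> H b" if "a \<in> feas l u" "b \<in> feas l u" for a b
  proof -
    have "0 \<le> mu / 2 * (b - a)^2"
      using A4_mu by simp
    then show ?thesis
      using A4_conv[OF that] by linarith
  qed
  show ?thesis
  proof (intro conjI impI)
    assume "\<forall>x\<in>feas l u. (\<integral>\<^sup>+ xi. ennreal ((hx x xi)^2) \<partial>D) \<le> ennreal (K1^2)"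
    then show "(\<integral>p. H (snd p / real T) - H xstar \<partial>cba_run K T x1 0)
        \<le> (x1 - xstar)^2 / (2 * eta * real T) + eta * (K1^2 + 2 * K3) / 2"
      using hx_second_moment_le
      by (intro cba_rate_bounded_gradient[OF T_pos eta x1 opt H_cont H_conv]) auto
  next
    assume "L-lipschitz_on (feas l u) Hd \<and>
      (\<forall>x\<in>feas l u. (\<integral>\<^sup>+ xi. ennreal ((hx x xi - Hd x)^2) \<partial>D) \<le> ennreal (K2^2)) \<and> eta * L < 1"
    then show "(\<integral>p. H (snd p / real T) - H xstar \<partial>cba_run K T x1 0)
        \<le> (x1 - xstar)^2 / (2 * eta * real T) + (H x1 - H xstar) / real T + (K2^2 + 2 * K3) / (1 / eta - L)"
      using hx_variance_le
      by (intro cba_rate_smooth[OF T_pos eta x1 opt H_cont H_conv A4_diff]) auto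
  qed
qed

end
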